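(* In the resource theory of unital maps on a $d$-dimensional Hilbert space, with the currency $\mathcal C=\{C^k\}_{k=1}^d\cup\{\Omega\}$, $C^k=\{\Pi^k/k\}$, $\mathrm{Val}(C^k)=\log d-\log k$, $\mathrm{Val}(\Omega)=0$, for every density operator $\rho$ and every $0\le\varepsilon\le1$, $$\mathrm{Cost}(\mathcal B^\varepsilon(\rho))=\log d-\sup_{\sigma\in\mathcal B^\varepsilon(\rho)}\log\big\lfloor 2^{H_{\min}(\sigma)}\big\rfloor=\log d-\log\big\lfloor 2^{H_{\min}^\varepsilon(\rho)}\big\rfloor.$$
   Context: $\Omega$ is the set of density operators on a Hilbert space of dimension $d$ with fixed orthonormal basis; $\Pi^k$ is the projector onto the first $k$ basis vectors. Allowed transformations: $f_{\mathcal E}(V)=\{\mathcal E(\rho):\rho\in V\}$ for unital CPTP maps $\mathcal E$; $V\to W$ iff some such $\mathcal E$ maps every element of $V$ into $W$. $\mathrm{Cost}(V)=\inf\{\mathrm{Val}(C):C\in\mathcal C,\ C\to V\}$. $\mathcal B^\varepsilon(\rho)=\{\sigma\in\Omega: D(\sigma,\rho)\le\varepsilon\}$ is the closed $\varepsilon$-ball around $\rho$ with respect to a fixed continuous metric $D$ on density operators (e.g. trace distance). $H_{\min}(\sigma)=-\log\lambda_{\max}(\sigma)$ ($\lambda_{\max}$ the largest eigenvalue) and $H^\varepsilon_{\min}(\rho)=\sup_{\sigma\in\mathcal B^\varepsilon(\rho)}H_{\min}(\sigma)$; $\lfloor\cdot\rfloor$ is the floor; logarithms base 2. *)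

theory Defs
  imports "Jordan_Normal_Form.Matrix" "Jordan_Normal_Form.Char_Poly"
    "Jordan_Normal_Form.Schur_Decomposition"
begin

text \<open>Operators on a d-dimensional Hilbert space with fixed orthonormal basis
  e_0,...,e_{d-1} are represented as complex d x d matrices (JNF type mat).\<close>

definition psd :: "nat \<Rightarrow> complex mat \<Rightarrow> bool" where
  "psd n A \<longleftrightarrow> A \<in> carrier_mat n n \<and>
     (\<forall>v \<in> carrier_vec n. let q = (\<Sum>i<n. cnj (v $ i) * (A *\<^sub>v v) $ i) in Im q = 0 \<and> Re q \<ge> 0)"

definition mtrace :: "complex mat \<Rightarrow> complex" where
  "mtrace A = (\<Sum>i<dim_row A. A $$ (i,i))"

definition states :: "nat \<Rightarrow> complex mat set" where
  "states d = {\<rho>. psd d \<rho> \<and> mtrace \<rho> = 1}"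

text \<open>id_k tensor E, acting blockwise on a (k*d) x (k*d) matrix (ancilla as first factor).\<close>
definition ampl :: "nat \<Rightarrow> nat \<Rightarrow> (complex mat \<Rightarrow> complex mat) \<Rightarrow> complex mat \<Rightarrow> complex mat" where
  "ampl d k E M = mat (k*d) (k*d) (\<lambda>(i,j).
      E (mat d d (\<lambda>(p,q). M $$ ((i div d)*d + p, (j div d)*d + q))) $$ (i mod d, j mod d))"

definition linear_map :: "nat \<Rightarrow> (complex mat \<Rightarrow> complex mat) \<Rightarrow> bool" where
  "linear_map d E \<longleftrightarrow>
     (\<forall>A \<in> carrier_mat d d. E A \<in> carrier_mat d d) \<and>
     (\<forall>A \<in> carrier_mat d d. \<forall>B \<in> carrier_mat d d. E (A + B) = E A + E B) \<and>
     (\<forall>A \<in> carrier_mat d d. \<forall>c. E (c \<cdot>\<^sub>m A) = c \<cdot>\<^sub>m E A)"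

definition completely_positive :: "nat \<Rightarrow> (complex mat \<Rightarrow> complex mat) \<Rightarrow> bool" where
  "completely_positive d E \<longleftrightarrow> (\<forall>k M. psd (k*d) M \<longrightarrow> psd (k*d) (ampl d k E M))"

definition trace_preserving :: "nat \<Rightarrow> (complex mat \<Rightarrow> complex mat) \<Rightarrow> bool" where
  "trace_preserving d E \<longleftrightarrow> (\<forall>A \<in> carrier_mat d d. mtrace (E A) = mtrace A)"

definition unital :: "nat \<Rightarrow> (complex mat \<Rightarrow> complex mat) \<Rightarrow> bool" where
  "unital d E \<longleftrightarrow> E (1\<^sub>m d) = 1\<^sub>m d"

definition unital_cptp :: "nat \<Rightarrow> (complex mat \<Rightarrow> complex mat) \<Rightarrow> bool" where
  "unital_cptp d E \<longleftrightarrow> linear_map d E \<and> completely_positive d E \<and>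
     trace_preserving d E \<and> unital d E"

definition converts :: "nat \<Rightarrow> complex mat set \<Rightarrow> complex mat set \<Rightarrow> bool" where
  "converts d V W \<longleftrightarrow> (\<exists>E. unital_cptp d E \<and> (\<forall>\<rho>\<in>V. E \<rho> \<in> W))"

definition proj :: "nat \<Rightarrow> nat \<Rightarrow> complex mat" where
  "proj d k = mat d d (\<lambda>(i,j). if i = j \<and> i < k then 1 else 0)"

definition Ccur :: "nat \<Rightarrow> nat \<Rightarrow> complex mat set" where
  "Ccur d k = {(1 / of_nat k) \<cdot>\<^sub>m proj d k}"

text \<open>Cost(V) = inf {Val(C) : C in currency, C \<rightarrow> V}, with currency
  {C^k : 1 \<le> k \<le> d} \<union> {Omega}, Val(C^k) = log d - log k, Val(Omega) = 0.\<close>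
definition cost :: "nat \<Rightarrow> complex mat set \<Rightarrow> real" where
  "cost d V = Inf ((\<lambda>k. log 2 (real d) - log 2 (real k)) ` {k \<in> {1..d}. converts d (Ccur d k) V}
                   \<union> (if converts d (states d) V then {0} else {}))"

definition lambda_max :: "complex mat \<Rightarrow> real" where
  "lambda_max A = Max (Re ` {e. eigenvalue A e})"

definition Hmin :: "complex mat \<Rightarrow> real" where
  "Hmin \<sigma> = - log 2 (lambda_max \<sigma>)"

definition eball :: "nat \<Rightarrow> (complex mat \<Rightarrow> complex mat \<Rightarrow> real) \<Rightarrow> real \<Rightarrow> complex mat \<Rightarrow> complex mat set" where
  "eball d D \<epsilon> \<rho> = {\<sigma> \<in> states d. D \<sigma> \<rho> \<le> \<epsilon>}"

definition Hmin_eps :: "nat \<Rightarrow> (complex mat \<Rightarrow> complex mat \<Rightarrow> real) \<Rightarrow> real \<Rightarrow> complex mat \<Rightarrow> real" where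
  "Hmin_eps d D \<epsilon> \<rho> = (SUP \<sigma> \<in> eball d D \<epsilon> \<rho>. Hmin \<sigma>)"

definition continuous_metric_on_states :: "nat \<Rightarrow> (complex mat \<Rightarrow> complex mat \<Rightarrow> real) \<Rightarrow> bool" where
  "continuous_metric_on_states d D \<longleftrightarrow>
     (\<forall>x\<in>states d. \<forall>y\<in>states d. D x y \<ge> 0 \<and> (D x y = 0 \<longleftrightarrow> x = y) \<and> D x y = D y x) \<and>
     (\<forall>x\<in>states d. \<forall>y\<in>states d. \<forall>z\<in>states d. D x z \<le> D x y + D y z) \<and>
     (\<forall>x\<in>states d. \<forall>y\<in>states d. \<forall>e>0. \<exists>\<delta>>0. \<forall>x'\<in>states d. \<forall>y'\<in>states d.
        (\<forall>i<d. \<forall>j<d. cmod (x' $$ (i,j) - x $$ (i,j)) < \<delta> \<and> cmod (y' $$ (i,j) - y $$ (i,j)) < \<delta>)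
        \<longrightarrow> \<bar>D x' y' - D x y\<bar> < e)"

end

theory Submission
  imports Defs
begin

text \<open>
  If a unital channel E maps \<Pi>k/k to \<sigma>, then E(1 - \<Pi>k) = 1 - k\<sigma> is positive, so
  lambda_max \<sigma> \<le> 1/k. Conversely, if lambda_max \<sigma> \<le> 1/k, the measure-and-prepare channel that
  prepares \<sigma> on the first k basis outcomes and (1 - k\<sigma>)/(d - k) on the others is unital and maps
  \<Pi>k/k to \<sigma>. Hence C(k) converts into V iff k \<le> 2 powr Hmin \<sigma> for some \<sigma> \<in> V, and the cost of V
  is log d - log m for the largest such integer m. By compactness of the ball and lower
  semicontinuity of lambda_max, some \<sigma>0 in the ball minimises lambda_max, and every supremum in the
  statement is attained at \<sigma>0.
\<close>

section \<open>Sesquilinear forms and positive matrices\<close>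

text \<open>Vectors are functions nat \<Rightarrow> complex of which only the first n values matter.\<close>

definition sesq :: "nat \<Rightarrow> complex mat \<Rightarrow> (nat \<Rightarrow> complex) \<Rightarrow> (nat \<Rightarrow> complex) \<Rightarrow> complex" where
  "sesq n A x y = (\<Sum>i<n. \<Sum>j<n. cnj (x i) * A$$(i,j) * y j)"

definition sqnorm :: "nat \<Rightarrow> (nat \<Rightarrow> complex) \<Rightarrow> real" where
  "sqnorm n x = (\<Sum>i<n. (cmod (x i))^2)"

definition basis_fun :: "nat \<Rightarrow> nat \<Rightarrow> complex" where
  "basis_fun i = (\<lambda>t. if t = i then 1 else 0)"

definition hermitian :: "nat \<Rightarrow> complex mat \<Rightarrow> bool" where
  "hermitian n A \<longleftrightarrow> (\<forall>i<n. \<forall>j<n. A$$(j,i) = cnj (A$$(i,j)))"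

lemma sesq_add_left: "sesq n A (\<lambda>t. x t + y t) z = sesq n A x z + sesq n A y z"
  unfolding sesq_def by (simp add: distrib_right sum.distrib)

lemma sesq_add_right: "sesq n A z (\<lambda>t. x t + y t) = sesq n A z x + sesq n A z y"
  unfolding sesq_def by (simp add: distrib_left sum.distrib)

lemma sesq_scale_left: "sesq n A (\<lambda>t. c * x t) z = cnj c * sesq n A x z"
  unfolding sesq_def by (simp add: sum_distrib_left mult.assoc)

lemma sesq_scale_right: "sesq n A z (\<lambda>t. c * x t) = c * sesq n A z x"
  unfolding sesq_def by (simp add: sum_distrib_left mult.assoc mult.left_commute)

lemma sesq_scale_both: "sesq n A (\<lambda>t. c * x t) (\<lambda>t. c * x t) = of_real ((cmod c)^2) * sesq n A x x"
proof -
  have "sesq n A (\<lambda>t. c * x t) (\<lambda>t. c * x t) = (cnj c * c) * sesq n A x x"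
    by (simp add: sesq_scale_left sesq_scale_right)
  also have "cnj c * c = of_real ((cmod c)^2)"
    by (metis complex_norm_square mult.commute of_real_power)
  finally show ?thesis .
qed

lemma sesq_expand:
  "sesq n A (\<lambda>t. x t + z * y t) (\<lambda>t. x t + z * y t)
   = sesq n A x x + z * sesq n A x y + cnj z * sesq n A y x + cnj z * z * sesq n A y y"
  by (simp add: sesq_add_left sesq_add_right sesq_scale_left sesq_scale_right
      distrib_left add.assoc mult.assoc)

lemma sesq_cong:
  "(\<And>i. i < n \<Longrightarrow> x i = x' i) \<Longrightarrow> (\<And>i. i < n \<Longrightarrow> y i = y' i)
   \<Longrightarrow> (\<And>i j. i < n \<Longrightarrow> j < n \<Longrightarrow> A$$(i,j) = B$$(i,j)) \<Longrightarrow> sesq n A x y = sesq n B x' y'"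
  unfolding sesq_def by (intro sum.cong refl) auto

lemma sesq_basis_left:
  assumes "i < n" shows "sesq n A (basis_fun i) y = (\<Sum>j<n. A$$(i,j) * y j)"
proof -
  have "sesq n A (basis_fun i) y = (\<Sum>i'<n. if i' = i then (\<Sum>j<n. A$$(i',j) * y j) else 0)"
    unfolding sesq_def basis_fun_def by (intro sum.cong refl) auto
  then show ?thesis using assms by simp
qed

lemma sesq_basis: "i < n \<Longrightarrow> j < n \<Longrightarrow> sesq n A (basis_fun i) (basis_fun j) = A $$ (i,j)"
proof -
  have "\<And>a b. a * (if b then 1 else 0) = (if b then a else (0::complex))"
    "\<And>a b. cnj (if b then 1 else 0) * a = (if b then a else (0::complex))" by simp_all
  then show "i < n \<Longrightarrow> j < n \<Longrightarrow> ?thesis" unfolding sesq_def basis_fun_def by simp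
qed

lemma sesq_eq_mult_mat_vec:
  assumes "A \<in> carrier_mat n n"
  shows "sesq n A x x = (\<Sum>i<n. cnj (x i) * (\<Sum>j<n. A$$(i,j) * x j))"
  unfolding sesq_def by (intro sum.cong refl) (simp add: sum_distrib_left mult.assoc)

lemma mult_mat_vec_sum:
  assumes "A \<in> carrier_mat n n" "v \<in> carrier_vec n" "i < n"
  shows "(A *\<^sub>v v) $ i = (\<Sum>j<n. A$$(i,j) * v$j)"
  using assms by (simp add: scalar_prod_def lessThan_atLeast0)

lemma sesq_mat_lincomb:
  "sesq n (mat n n (\<lambda>(i,j). a * B$$(i,j) + b * C$$(i,j))) x y = a * sesq n B x y + b * sesq n C x y"
proof -
  have "sesq n (mat n n (\<lambda>(i,j). a * B$$(i,j) + b * C$$(i,j))) x y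
     = (\<Sum>i<n. \<Sum>j<n. a * (cnj (x i) * B$$(i,j) * y j) + b * (cnj (x i) * C$$(i,j) * y j))"
    unfolding sesq_def
    by (intro sum.cong refl) (simp add: distrib_left distrib_right mult.assoc mult.left_commute)
  then show ?thesis by (simp add: sum.distrib sum_distrib_left sesq_def)
qed

lemma sesq_mat_scale: "sesq n (mat n n (\<lambda>(i,j). a * B$$(i,j))) x y = a * sesq n B x y"
  unfolding sesq_def by (simp add: sum_distrib_left mult.assoc mult.left_commute)

lemma sesq_mat_sum:
  "sesq d (mat d d (\<lambda>(p,q). \<Sum>i\<in>I. m i * B i $$ (p,q))) x y = (\<Sum>i\<in>I. m i * sesq d (B i) x y)"
proof -
  have "sesq d (mat d d (\<lambda>(p,q). \<Sum>i\<in>I. m i * B i $$ (p,q))) x y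
      = (\<Sum>p<d. \<Sum>q<d. \<Sum>i\<in>I. m i * (cnj (x p) * B i $$ (p,q) * y q))"
    unfolding sesq_def
    by (intro sum.cong refl) (simp add: sum_distrib_left sum_distrib_right mult.assoc mult.left_commute)
  also have "\<dots> = (\<Sum>p<d. \<Sum>i\<in>I. \<Sum>q<d. m i * (cnj (x p) * B i $$ (p,q) * y q))"
    by (rule sum.cong[OF refl]) (rule sum.swap)
  also have "\<dots> = (\<Sum>i\<in>I. \<Sum>p<d. \<Sum>q<d. m i * (cnj (x p) * B i $$ (p,q) * y q))"
    by (rule sum.swap)
  finally show ?thesis unfolding sesq_def by (simp add: sum_distrib_left)
qed

lemma sesq_one: "sesq n (1\<^sub>m n) x y = (\<Sum>i<n. cnj (x i) * y i)"
proof -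
  have "\<And>a b. a * (if b then 1 else 0) = (if b then a else (0::complex))"
    "\<And>a b c. (if b then a else 0) * c = (if b then a * c else (0::complex))" by simp_all
  then show ?thesis unfolding sesq_def by (intro sum.cong refl) simp
qed

lemma sesq_one_basis:
  assumes "i < n" shows "sesq n (1\<^sub>m n) (basis_fun i) y = y i"
proof -
  have "sesq n (1\<^sub>m n) (basis_fun i) y = (\<Sum>i'<n. if i' = i then y i' else 0)"
    unfolding sesq_one basis_fun_def by (intro sum.cong refl) auto
  then show ?thesis using assms by simp
qed

lemma sesq_one_self: "sesq n (1\<^sub>m n) x x = of_real (sqnorm n x)"
  unfolding sesq_one sqnorm_def of_real_sum
  by (intro sum.cong refl) (metis complex_norm_square mult.commute of_real_power)

lemma sqnorm_nonneg: "sqnorm n x \<ge> 0"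
  unfolding sqnorm_def by (simp add: sum_nonneg)

lemma sqnorm_eq_0D: "sqnorm n x = 0 \<Longrightarrow> i < n \<Longrightarrow> x i = 0"
  unfolding sqnorm_def by (subst (asm) sum_nonneg_eq_0_iff) auto

lemma sqnorm_ge_coord: "i < n \<Longrightarrow> (cmod (x i))^2 \<le> sqnorm n x"
  unfolding sqnorm_def by (rule member_le_sum) auto

lemma coord_le_1_of_sqnorm_1: "sqnorm n x = 1 \<Longrightarrow> i < n \<Longrightarrow> cmod (x i) \<le> 1"
  using sqnorm_ge_coord[of i n x] by (rule_tac power2_le_imp_le) simp_all

lemma sqnorm_scale: "sqnorm n (\<lambda>t. c * x t) = (cmod c)^2 * sqnorm n x"
  unfolding sqnorm_def by (simp add: sum_distrib_left norm_mult power_mult_distrib)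

lemma sqnorm_basis_fun: "i < n \<Longrightarrow> sqnorm n (basis_fun i) = 1"
  unfolding sqnorm_def basis_fun_def by (simp add: if_distrib[of "\<lambda>z. (cmod z)^2"] cong: if_cong)

lemma norm_sesq_le_entries:
  assumes "\<And>i. i < n \<Longrightarrow> cmod (x i) \<le> 1"
  shows "cmod (sesq n A x x) \<le> (\<Sum>i<n. \<Sum>j<n. cmod (A$$(i,j)))"
proof -
  have "cmod (sesq n A x x) \<le> (\<Sum>i<n. \<Sum>j<n. cmod (cnj (x i) * A$$(i,j) * x j))"
    unfolding sesq_def by (rule order.trans[OF norm_sum sum_mono[OF norm_sum]])
  also have "\<dots> \<le> (\<Sum>i<n. \<Sum>j<n. cmod (A$$(i,j)))"
  proof (intro sum_mono)
    fix i j assume "i \<in> {..<n}" "j \<in> {..<n}"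
    then have "cmod (x i) * cmod (A$$(i,j)) * cmod (x j) \<le> 1 * cmod (A$$(i,j)) * 1"
      using assms by (intro mult_mono) auto
    then show "cmod (cnj (x i) * A$$(i,j) * x j) \<le> cmod (A$$(i,j))"
      by (simp add: norm_mult)
  qed
  finally show ?thesis .
qed

lemma psd_iff_sesq:
  "psd n A \<longleftrightarrow> A \<in> carrier_mat n n \<and> (\<forall>x. Im (sesq n A x x) = 0 \<and> Re (sesq n A x x) \<ge> 0)"
proof -
  have vec: "(\<Sum>i<n. cnj (v $ i) * (A *\<^sub>v v) $ i) = sesq n A (\<lambda>i. v$i) (\<lambda>i. v$i)"
    if "A \<in> carrier_mat n n" "v \<in> carrier_vec n" for v
    unfolding sesq_def
    by (intro sum.cong refl, subst mult_mat_vec_sum[OF that]) (simp_all add: sum_distrib_left mult.assoc)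
  show ?thesis
  proof
    assume psd: "psd n A"
    then have A: "A \<in> carrier_mat n n" unfolding psd_def by auto
    have "sesq n A x x = sesq n A (\<lambda>i. vec n x $ i) (\<lambda>i. vec n x $ i)" for x
      by (rule sesq_cong) auto
    with psd vec[OF A vec_carrier] show "A \<in> carrier_mat n n \<and> (\<forall>x. Im (sesq n A x x) = 0 \<and> Re (sesq n A x x) \<ge> 0)"
      unfolding psd_def Let_def by (metis vec_carrier)
  next
    assume "A \<in> carrier_mat n n \<and> (\<forall>x. Im (sesq n A x x) = 0 \<and> Re (sesq n A x x) \<ge> 0)"
    then show "psd n A" unfolding psd_def Let_def using vec by auto
  qed
qed

lemma psd_sesq_nonneg: "psd n A \<Longrightarrow> Re (sesq n A x x) \<ge> 0"
  unfolding psd_iff_sesq by blast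

lemma psd_sesq_Im: "psd n A \<Longrightarrow> Im (sesq n A x x) = 0"
  unfolding psd_iff_sesq by blast

lemma psd_sesq_real: "psd n A \<Longrightarrow> sesq n A x x = of_real (Re (sesq n A x x))"
  using psd_sesq_Im[of n A x] by (simp add: complex_eq_iff)

lemma psd_diag_real:
  "psd n A \<Longrightarrow> i < n \<Longrightarrow> A$$(i,i) = of_real (Re (A$$(i,i))) \<and> Re (A$$(i,i)) \<ge> 0"
  using psd_sesq_real[of n A "basis_fun i"] psd_sesq_nonneg[of n A "basis_fun i"]
  by (simp add: sesq_basis)

lemma psd_hermitian:
  assumes "psd n A" shows "hermitian n A"
  unfolding hermitian_def
proof (intro allI impI)
  fix i j assume i: "i < n" and j: "j < n"
  have real: "Im (sesq n A x x) = 0" for x using psd_sesq_Im[OF assms] .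
  have expand: "sesq n A (\<lambda>t. basis_fun i t + z * basis_fun j t) (\<lambda>t. basis_fun i t + z * basis_fun j t)
     = A$$(i,i) + z * A$$(i,j) + cnj z * A$$(j,i) + cnj z * z * A$$(j,j)" for z
    unfolding sesq_expand using i j by (simp add: sesq_basis)
  \<comment> \<open>the form at e_i + e_j and at e_i + \<i> e_j yields the imaginary and the real part\<close>
  have "Im (A$$(i,i)) = 0" "Im (A$$(j,j)) = 0"
    using real[of "basis_fun i"] real[of "basis_fun j"] i j by (simp_all add: sesq_basis)
  moreover have "Im (A$$(i,i) + A$$(i,j) + A$$(j,i) + A$$(j,j)) = 0"
    using real[of "\<lambda>t. basis_fun i t + 1 * basis_fun j t"] unfolding expand by simp
  moreover have "Im (A$$(i,i) + \<i> * A$$(i,j) - \<i> * A$$(j,i) + A$$(j,j)) = 0"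
    using real[of "\<lambda>t. basis_fun i t + \<i> * basis_fun j t"] unfolding expand by simp
  ultimately show "A$$(j,i) = cnj (A$$(i,j))"
    by (simp add: complex_eq_iff)
qed

lemma hermitianD: "hermitian n A \<Longrightarrow> i < n \<Longrightarrow> j < n \<Longrightarrow> A$$(j,i) = cnj (A$$(i,j))"
  unfolding hermitian_def by blast

lemma sesq_swap: assumes "hermitian n A" shows "sesq n A y x = cnj (sesq n A x y)"
proof -
  have "sesq n A y x = (\<Sum>j<n. \<Sum>i<n. cnj (y i) * A$$(i,j) * x j)"
    unfolding sesq_def by (rule sum.swap)
  also have "\<dots> = (\<Sum>j<n. \<Sum>i<n. cnj (cnj (x j) * A$$(j,i) * y i))"
  proof (intro sum.cong refl)
    fix j i assume "j \<in> {..<n}" "i \<in> {..<n}"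
    then have "A$$(i,j) = cnj (A$$(j,i))" using hermitianD[OF assms] by blast
    then show "cnj (y i) * A$$(i,j) * x j = cnj (cnj (x j) * A$$(j,i) * y i)"
      by (simp add: mult.commute mult.left_commute)
  qed
  finally show ?thesis unfolding sesq_def by simp
qed

lemma hermitian_sesq_Im: "hermitian n A \<Longrightarrow> Im (sesq n A x x) = 0"
  using sesq_swap[of n A x x] by (simp add: complex_eq_iff)

lemma le_mult_of_quadratic_nonneg:
  fixes a b c :: real
  assumes quad: "\<And>s. 0 \<le> a - 2 * s * b + s^2 * b * c" and "b \<ge> 0" "a \<ge> 0" "c \<ge> 0"
  shows "b \<le> a * c"
proof (cases "b = 0")
  case False
  then have b: "b > 0" using assms by simp
  show ?thesis
  proof (cases "c = 0")
    case True
    have "0 \<le> a - 2 * ((a+1)/(2*b)) * b + ((a+1)/(2*b))^2 * b * c" by (rule quad)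
    also have "\<dots> = -1" using True b by (simp add: field_simps)
    finally show ?thesis by simp
  next
    case False
    then have c: "c > 0" using assms by simp
    have "0 \<le> a - 2 * (1/c) * b + (1/c)^2 * b * c" by (rule quad)
    also have "\<dots> = a - b / c" using c by (simp add: field_simps power2_eq_square)
    finally show ?thesis using c by (simp add: field_simps mult.commute)
  qed
qed (use assms in simp)

lemma psd_cauchy_schwarz:
  assumes A: "psd n A"
  shows "(cmod (sesq n A x y))^2 \<le> Re (sesq n A x x) * Re (sesq n A y y)"
proof -
  define b where "b = sesq n A x y"
  have yx: "sesq n A y x = cnj b" unfolding b_def by (rule sesq_swap[OF psd_hermitian[OF A]])
  have yy: "sesq n A y y = of_real (Re (sesq n A y y))" by (rule psd_sesq_real[OF A])
  have bb: "cnj b * b = of_real ((cmod b)^2)"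
    by (metis complex_norm_square mult.commute of_real_power)
  \<comment> \<open>positivity of the form at x - s b* y for all real s\<close>
  have "0 \<le> Re (sesq n A x x) - 2 * s * (cmod b)^2 + s^2 * (cmod b)^2 * Re (sesq n A y y)" for s
  proof -
    define z where "z = - (of_real s) * cnj b"
    have "0 \<le> Re (sesq n A (\<lambda>t. x t + z * y t) (\<lambda>t. x t + z * y t))" by (rule psd_sesq_nonneg[OF A])
    also have "sesq n A (\<lambda>t. x t + z * y t) (\<lambda>t. x t + z * y t)
       = sesq n A x x + z * b + cnj z * cnj b + cnj z * z * sesq n A y y"
      unfolding sesq_expand b_def[symmetric] yx ..
    also have "z * b = - of_real (s * (cmod b)^2)"
      unfolding z_def using bb by (simp add: mult.commute mult.left_commute)
    also have "cnj z * cnj b = - of_real (s * (cmod b)^2)"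
      unfolding z_def using bb by (simp add: mult.commute mult.left_commute)
    also have "cnj z * z = of_real (s^2 * (cmod b)^2)"
      unfolding z_def using bb by (simp add: mult.commute mult.left_commute power2_eq_square)
    finally show ?thesis by (subst (asm) yy) (simp add: algebra_simps)
  qed
  then show ?thesis
    unfolding b_def by (rule le_mult_of_quadratic_nonneg) (auto intro: psd_sesq_nonneg[OF A])
qed

lemma psd_zero_diag_row:
  assumes A: "psd n A" and "k < n" "q < n" and "Re (A$$(k,k)) = 0"
  shows "A$$(k,q) = 0" "A$$(q,k) = 0"
proof -
  have "(cmod (A$$(k,q)))^2 \<le> 0"
    using psd_cauchy_schwarz[OF A, of "basis_fun k" "basis_fun q"] assms by (simp add: sesq_basis)
  then show "A$$(k,q) = 0" by simp
  then show "A$$(q,k) = 0" using hermitianD[OF psd_hermitian[OF A] \<open>k < n\<close> \<open>q < n\<close>] by simp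
qed

section \<open>Sequential compactness\<close>

lemma convergent_subseq_finite_real:
  fixes f :: "nat \<Rightarrow> 'c \<Rightarrow> real"
  assumes "finite S" and "\<And>c. c \<in> S \<Longrightarrow> \<exists>B. \<forall>n. \<bar>f n c\<bar> \<le> B"
  shows "\<exists>r. strict_mono r \<and> (\<forall>c\<in>S. convergent (\<lambda>n. f (r n) c))"
  using assms
proof (induction S rule: finite_induct)
  case empty
  show ?case by (rule exI[of _ id]) (simp add: strict_mono_def)
next
  case (insert c S)
  then obtain r where r: "strict_mono r" "\<forall>c\<in>S. convergent (\<lambda>n. f (r n) c)" by blast
  obtain B where B: "\<forall>n. \<bar>f n c\<bar> \<le> B" using insert.prems by blast
  obtain r' where r': "strict_mono r'" "monoseq (\<lambda>n. f (r (r' n)) c)"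
    using seq_monosub[of "\<lambda>n. f (r n) c"] by blast
  have "Bseq (\<lambda>n. f (r (r' n)) c)" by (rule BseqI'[of _ B]) (use B in simp)
  then have "convergent (\<lambda>n. f (r (r' n)) c)" using r'(2) Bseq_monoseq_convergent by blast
  moreover have "convergent (\<lambda>n. f (r (r' n)) c')" if "c' \<in> S" for c'
    using convergent_subseq_convergent[OF r(2)[rule_format, OF that] r'(1)] by (simp add: comp_def)
  ultimately show ?case using strict_mono_compose[OF r(1) r'(1)]
    by (intro exI[of _ "\<lambda>x. r (r' x)"]) auto
qed

lemma convergent_subseq_finite:
  fixes f :: "nat \<Rightarrow> 'c \<Rightarrow> complex"
  assumes "finite S" and "\<And>c n. c \<in> S \<Longrightarrow> cmod (f n c) \<le> B"
  shows "\<exists>r. strict_mono r \<and> (\<forall>c\<in>S. \<exists>l. (\<lambda>n. f (r n) c) \<longlonglongrightarrow> l)"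
proof -
  define g where "g n p = (if snd p then Re (f n (fst p)) else Im (f n (fst p)))" for n p
  have "\<exists>B. \<forall>n. \<bar>g n p\<bar> \<le> B" if "p \<in> S \<times> UNIV" for p
    using that assms(2) unfolding g_def
    by (intro exI[of _ B]) (auto intro: order.trans[OF abs_Re_le_cmod] order.trans[OF abs_Im_le_cmod])
  then obtain r where r: "strict_mono r" "\<forall>p\<in>S \<times> UNIV. convergent (\<lambda>n. g (r n) p)"
    using convergent_subseq_finite_real[of "S \<times> UNIV" g] assms(1) by auto
  have "\<exists>l. (\<lambda>n. f (r n) c) \<longlonglongrightarrow> l" if c: "c \<in> S" for c
  proof -
    have "convergent (\<lambda>n. g (r n) (c, True))" "convergent (\<lambda>n. g (r n) (c, False))"
      using r c by auto
    then obtain a b where "(\<lambda>n. Re (f (r n) c)) \<longlonglongrightarrow> a" "(\<lambda>n. Im (f (r n) c)) \<longlonglongrightarrow> b"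
      unfolding g_def convergent_def by auto
    then have "(\<lambda>n. Complex (Re (f (r n) c)) (Im (f (r n) c))) \<longlonglongrightarrow> Complex a b"
      by (rule tendsto_Complex)
    then show ?thesis by auto
  qed
  then show ?thesis using r(1) by blast
qed

lemma tendsto_cSup_seq:
  fixes f :: "'a \<Rightarrow> real"
  assumes "S \<noteq> {}" and bdd: "bdd_above (f ` S)"
  obtains X where "\<And>k. X k \<in> S" and "(\<lambda>k. f (X k)) \<longlonglongrightarrow> Sup (f ` S)"
proof -
  have "\<exists>x\<in>S. Sup (f ` S) - inverse (real (Suc k)) < f x" for k
  proof -
    have "Sup (f ` S) - inverse (real (Suc k)) < Sup (f ` S)" by simp
    then show ?thesis using assms(1) by (subst (asm) less_cSup_iff[OF _ bdd]) auto
  qed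
  then obtain X where X: "\<And>k. X k \<in> S" "\<And>k. Sup (f ` S) - inverse (real (Suc k)) < f (X k)"
    by metis
  have lower: "(\<lambda>k. Sup (f ` S) - inverse (real (Suc k))) \<longlonglongrightarrow> Sup (f ` S)"
    using tendsto_diff[OF tendsto_const LIMSEQ_inverse_real_of_nat] by simp
  have "(\<lambda>k. f (X k)) \<longlonglongrightarrow> Sup (f ` S)"
  proof (rule tendsto_sandwich[OF _ _ lower tendsto_const])
    show "\<forall>\<^sub>F k in sequentially. Sup (f ` S) - inverse (real (Suc k)) \<le> f (X k)"
      by (intro always_eventually allI less_imp_le X(2))
    show "\<forall>\<^sub>F k in sequentially. f (X k) \<le> Sup (f ` S)"
      by (intro always_eventually allI cSup_upper imageI X(1) bdd)
  qed
  with X(1) show thesis by (rule that)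
qed

lemma tendsto_cInf_seq:
  fixes f :: "'a \<Rightarrow> real"
  assumes "S \<noteq> {}" and "bdd_below (f ` S)"
  obtains X where "\<And>k. X k \<in> S" and "(\<lambda>k. f (X k)) \<longlonglongrightarrow> Inf (f ` S)"
proof -
  have "bdd_above ((\<lambda>x. - f x) ` S)" using assms(2) by (simp only: bdd_above_uminus_image)
  then obtain X where X: "\<And>k. X k \<in> S" and lim: "(\<lambda>k. - f (X k)) \<longlonglongrightarrow> Sup ((\<lambda>x. - f x) ` S)"
    using tendsto_cSup_seq[OF assms(1)] by blast
  have "Sup ((\<lambda>x. - f x) ` S) = - Inf (f ` S)" by (simp add: Inf_real_def image_image)
  with lim have "(\<lambda>k. f (X k)) \<longlonglongrightarrow> Inf (f ` S)"
    using tendsto_minus_cancel_left[of "\<lambda>k. - f (X k)" "Inf (f ` S)" sequentially] by simp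
  with X show thesis by (rule that)
qed

lemma sphere_convergent_subseq:
  fixes X :: "nat \<Rightarrow> nat \<Rightarrow> complex"
  assumes "\<And>k. sqnorm n (X k) = 1"
  obtains r u where "strict_mono r" and "sqnorm n u = 1" and "\<And>i. i < n \<Longrightarrow> (\<lambda>k. X (r k) i) \<longlonglongrightarrow> u i"
proof -
  obtain r where r: "strict_mono r" "\<forall>i\<in>{..<n}. \<exists>l. (\<lambda>k. X (r k) i) \<longlonglongrightarrow> l"
    using convergent_subseq_finite[of "{..<n}" X 1] assms coord_le_1_of_sqnorm_1 by blast
  define u where "u i = (if i < n then lim (\<lambda>k. X (r k) i) else 0)" for i
  have conv: "(\<lambda>k. X (r k) i) \<longlonglongrightarrow> u i" if "i < n" for i
    using r(2) that unfolding u_def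
    by (auto intro: limI simp: convergent_LIMSEQ_iff[symmetric] convergent_def)
  have "(\<lambda>k. sqnorm n (X (r k))) \<longlonglongrightarrow> sqnorm n u"
    unfolding sqnorm_def by (intro tendsto_sum tendsto_power tendsto_norm conv) simp
  moreover have "(\<lambda>k. sqnorm n (X (r k))) = (\<lambda>k. 1)" using assms by simp
  ultimately have "sqnorm n u = 1" using LIMSEQ_unique tendsto_const by metis
  with r(1) conv show thesis using that by blast
qed

section \<open>The largest eigenvalue of a Hermitian matrix\<close>

definition shift_mat :: "nat \<Rightarrow> real \<Rightarrow> complex mat \<Rightarrow> complex mat" where
  "shift_mat n c A = mat n n (\<lambda>(i,j). of_real c * (1\<^sub>m n)$$(i,j) + (-1) * A$$(i,j))"

lemma shift_mat_index:
  "p < n \<Longrightarrow> q < n \<Longrightarrow> shift_mat n c A $$ (p,q) = (if p = q then of_real c else 0) - A$$(p,q)"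
  unfolding shift_mat_def by simp

lemma sesq_shift_mat: "sesq n (shift_mat n c A) x y = of_real c * sesq n (1\<^sub>m n) x y - sesq n A x y"
  unfolding shift_mat_def sesq_mat_lincomb by simp

lemma psd_shift_mat_iff:
  assumes "hermitian n A"
  shows "psd n (shift_mat n c A) \<longleftrightarrow> (\<forall>x. Re (sesq n A x x) \<le> c * sqnorm n x)"
proof -
  have "sesq n (shift_mat n c A) x x = of_real (c * sqnorm n x) - sesq n A x x" for x
    unfolding sesq_shift_mat sesq_one_self by simp
  then show ?thesis
    unfolding psd_iff_sesq using hermitian_sesq_Im[OF assms] by (simp add: shift_mat_def)
qed

lemma sesq_max_on_sphere:
  assumes "0 < n"
  obtains u where "sqnorm n u = 1" and "\<And>x. sqnorm n x = 1 \<Longrightarrow> Re (sesq n A x x) \<le> Re (sesq n A u u)"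
proof -
  define U where "U = {x. sqnorm n x = 1}"
  define R where "R x = Re (sesq n A x x)" for x
  have bdd: "bdd_above (R ` U)"
  proof
    fix y assume "y \<in> R ` U"
    then obtain x where "x \<in> U" "y = R x" by blast
    then have "y \<le> cmod (sesq n A x x)" unfolding R_def by (simp add: complex_Re_le_cmod)
    also have "\<dots> \<le> (\<Sum>i<n. \<Sum>j<n. cmod (A$$(i,j)))"
      using \<open>x \<in> U\<close> coord_le_1_of_sqnorm_1 unfolding U_def by (intro norm_sesq_le_entries) auto
    finally show "y \<le> (\<Sum>i<n. \<Sum>j<n. cmod (A$$(i,j)))" .
  qed
  have "basis_fun 0 \<in> U" unfolding U_def using sqnorm_basis_fun[OF assms] by simp
  then obtain X where X: "\<And>k. X k \<in> U" and lim: "(\<lambda>k. R (X k)) \<longlonglongrightarrow> Sup (R ` U)"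
    using tendsto_cSup_seq[OF _ bdd] by blast
  obtain r u where r: "strict_mono r" and u: "sqnorm n u = 1"
    and conv: "\<And>i. i < n \<Longrightarrow> (\<lambda>k. X (r k) i) \<longlonglongrightarrow> u i"
    using sphere_convergent_subseq[of n X] X unfolding U_def by blast
  have "(\<lambda>k. R (X (r k))) \<longlonglongrightarrow> R u"
    unfolding R_def sesq_def
    by (intro tendsto_Re tendsto_sum tendsto_mult tendsto_cnj tendsto_const conv) simp_all
  moreover have "(\<lambda>k. R (X (r k))) \<longlonglongrightarrow> Sup (R ` U)"
    using LIMSEQ_subseq_LIMSEQ[OF lim r] by (simp add: comp_def)
  ultimately have "R u = Sup (R ` U)" by (rule LIMSEQ_unique)
  then have "R x \<le> R u" if "x \<in> U" for x using that bdd by (simp add: cSup_upper)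
  with u show thesis using that unfolding U_def R_def by blast
qed

lemma sesq_le_of_sphere_bound:
  assumes "\<And>x. sqnorm n x = 1 \<Longrightarrow> Re (sesq n A x x) \<le> m"
  shows "Re (sesq n A x x) \<le> m * sqnorm n x"
proof (cases "sqnorm n x = 0")
  case True
  then have "sesq n A x x = 0" using sqnorm_eq_0D unfolding sesq_def by simp
  then show ?thesis using True by simp
next
  case False
  then have pos: "sqnorm n x > 0" using sqnorm_nonneg[of n x] by simp
  define c where "c = complex_of_real (1 / sqrt (sqnorm n x))"
  have c: "(cmod c)^2 = 1 / sqnorm n x"
    unfolding c_def norm_of_real power2_abs using pos by (simp add: power_divide del: of_real_divide)
  have "Re (sesq n A x x) / sqnorm n x = Re (sesq n A (\<lambda>t. c * x t) (\<lambda>t. c * x t))"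
    unfolding sesq_scale_both c by simp
  also have "\<dots> \<le> m" using pos by (intro assms) (simp add: sqnorm_scale c)
  finally show ?thesis using pos by (simp add: divide_le_eq mult.commute)
qed

lemma eigen_of_sesq_max:
  assumes A: "hermitian n A" and bound: "\<And>x. Re (sesq n A x x) \<le> m * sqnorm n x"
    and max: "Re (sesq n A u u) = m * sqnorm n u" and "i < n"
  shows "(\<Sum>j<n. A$$(i,j) * u j) = of_real m * u i"
proof -
  define C where "C = shift_mat n m A"
  have "psd n C" unfolding C_def psd_shift_mat_iff[OF A] using bound by blast
  moreover have "Re (sesq n C u u) = 0"
    unfolding C_def sesq_shift_mat sesq_one_self using max by simp
  \<comment> \<open>u is a null vector of the positive matrix m - A, hence in its kernel\<close>
  ultimately have "sesq n C (basis_fun i) u = 0"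
    using psd_cauchy_schwarz[of n C "basis_fun i" u] by simp
  then show ?thesis
    unfolding C_def sesq_shift_mat sesq_one_basis[OF \<open>i < n\<close>]
    unfolding sesq_basis_left[OF \<open>i < n\<close>] by simp
qed

lemma hermitian_top_eigenpair:
  assumes "hermitian n A" and "0 < n"
  obtains m u where "sqnorm n u = 1" and "\<And>i. i < n \<Longrightarrow> (\<Sum>j<n. A$$(i,j) * u j) = of_real m * u i"
    and "\<And>x. Re (sesq n A x x) \<le> m * sqnorm n x"
proof -
  obtain u where u: "sqnorm n u = 1"
    and max: "\<And>x. sqnorm n x = 1 \<Longrightarrow> Re (sesq n A x x) \<le> Re (sesq n A u u)"
    using sesq_max_on_sphere[OF assms(2)] by blast
  define m where "m = Re (sesq n A u u)"
  have bound: "Re (sesq n A x x) \<le> m * sqnorm n x" for x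
    unfolding m_def using max by (intro sesq_le_of_sphere_bound) auto
  have "Re (sesq n A u u) = m * sqnorm n u" unfolding m_def u by simp
  with eigen_of_sesq_max[OF assms(1) bound] show thesis using that u bound by blast
qed

lemma finite_eigenvalues:
  fixes A :: "complex mat" assumes "A \<in> carrier_mat n n" shows "finite {e. eigenvalue A e}"
proof -
  have "char_poly A \<noteq> 0" using degree_monic_char_poly[OF assms] by auto
  then show ?thesis unfolding eigenvalue_root_char_poly[OF assms] by (rule poly_roots_finite)
qed

lemma sesq_eigen:
  assumes A: "A \<in> carrier_mat n n" and "\<And>i. i < n \<Longrightarrow> (\<Sum>j<n. A$$(i,j) * u j) = a * u i"
  shows "sesq n A u u = a * of_real (sqnorm n u)"
proof -
  have "sesq n A u u = (\<Sum>i<n. cnj (u i) * (\<Sum>j<n. A$$(i,j) * u j))" by (rule sesq_eq_mult_mat_vec[OF A])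
  also have "\<dots> = (\<Sum>i<n. a * (cnj (u i) * u i))" using assms(2) by (intro sum.cong refl) simp
  also have "\<dots> = a * sesq n (1\<^sub>m n) u u" unfolding sesq_one by (simp add: sum_distrib_left)
  finally show ?thesis unfolding sesq_one_self .
qed

lemma eigenvalue_of_eigen_fun:
  assumes A: "A \<in> carrier_mat n n" and "sqnorm n u = 1"
    and eigen: "\<And>i. i < n \<Longrightarrow> (\<Sum>j<n. A$$(i,j) * u j) = a * u i"
  shows "eigenvalue A a"
  unfolding eigenvalue_def eigenvector_def
proof (intro exI conjI)
  show "vec n u \<in> carrier_vec (dim_row A)" using A by simp
  show "vec n u \<noteq> 0\<^sub>v (dim_row A)"
  proof
    assume "vec n u = 0\<^sub>v (dim_row A)"
    then have "\<And>i. i < n \<Longrightarrow> u i = 0" using A by (metis carrier_matD(1) index_vec index_zero_vec(1))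
    then have "sqnorm n u = 0" unfolding sqnorm_def by simp
    with \<open>sqnorm n u = 1\<close> show False by simp
  qed
  show "A *\<^sub>v vec n u = a \<cdot>\<^sub>v vec n u"
  proof (rule eq_vecI)
    fix i assume "i < dim_vec (a \<cdot>\<^sub>v vec n u)"
    then have i: "i < n" by simp
    have "(A *\<^sub>v vec n u) $ i = (\<Sum>j<n. A$$(i,j) * u j)"
      using mult_mat_vec_sum[OF A _ i, of "vec n u"] by simp
    then show "(A *\<^sub>v vec n u) $ i = (a \<cdot>\<^sub>v vec n u) $ i" using eigen[OF i] i by simp
  qed (use A in simp)
qed

lemma eigenvalue_Re_le:
  assumes A: "A \<in> carrier_mat n n" and "eigenvalue A e"
    and bound: "\<And>x. Re (sesq n A x x) \<le> m * sqnorm n x"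
  shows "Re e \<le> m"
proof -
  obtain v where v: "v \<in> carrier_vec n" "v \<noteq> 0\<^sub>v n" "A *\<^sub>v v = e \<cdot>\<^sub>v v"
    using assms(2) A unfolding eigenvalue_def eigenvector_def by auto
  define x where "x i = v $ i" for i
  obtain i where "i < n" "x i \<noteq> 0"
    using v(1,2) unfolding x_def by (metis eq_vecI carrier_vecD index_zero_vec)
  then have pos: "sqnorm n x > 0"
    using sqnorm_ge_coord[of i n x] by (metis order.strict_trans2 zero_less_norm_iff zero_less_power)
  have "(\<Sum>j<n. A$$(i,j) * x j) = e * x i" if "i < n" for i
    using mult_mat_vec_sum[OF A v(1) that] v(1,3) that unfolding x_def by simp
  then have "sesq n A x x = e * of_real (sqnorm n x)" by (rule sesq_eigen[OF A])
  then have "Re (sesq n A x x) = Re e * sqnorm n x" by simp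
  with bound[of x] pos show ?thesis by simp
qed

lemma lambda_max_eq_top_eigenvalue:
  assumes A: "A \<in> carrier_mat n n" and "sqnorm n u = 1"
    and eigen: "\<And>i. i < n \<Longrightarrow> (\<Sum>j<n. A$$(i,j) * u j) = of_real m * u i"
    and bound: "\<And>x. Re (sesq n A x x) \<le> m * sqnorm n x"
  shows "lambda_max A = m"
  unfolding lambda_max_def
proof (rule Max_eqI)
  show "finite (Re ` {e. eigenvalue A e})" using finite_eigenvalues[OF A] by simp
  show "y \<le> m" if "y \<in> Re ` {e. eigenvalue A e}" for y
    using that eigenvalue_Re_le[OF A _ bound] by auto
  show "m \<in> Re ` {e. eigenvalue A e}"
    using eigenvalue_of_eigen_fun[OF assms(1-3)] by (intro image_eqI[of _ _ "of_real m"]) auto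
qed

lemma sesq_le_lambda_max:
  assumes "A \<in> carrier_mat n n" "hermitian n A" "0 < n"
  shows "Re (sesq n A x x) \<le> lambda_max A * sqnorm n x"
proof -
  obtain m u where "sqnorm n u = 1" "\<And>i. i < n \<Longrightarrow> (\<Sum>j<n. A$$(i,j) * u j) = of_real m * u i"
    "\<And>x. Re (sesq n A x x) \<le> m * sqnorm n x"
    using hermitian_top_eigenpair[OF assms(2,3)] by metis
  with lambda_max_eq_top_eigenvalue[OF assms(1)] show ?thesis by metis
qed

lemma lambda_max_eigenvector:
  assumes "A \<in> carrier_mat n n" "hermitian n A" "0 < n"
  obtains u where "sqnorm n u = 1"
    and "\<And>i. i < n \<Longrightarrow> (\<Sum>j<n. A$$(i,j) * u j) = of_real (lambda_max A) * u i"
proof -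
  obtain m u where "sqnorm n u = 1" "\<And>i. i < n \<Longrightarrow> (\<Sum>j<n. A$$(i,j) * u j) = of_real m * u i"
    "\<And>x. Re (sesq n A x x) \<le> m * sqnorm n x"
    using hermitian_top_eigenpair[OF assms(2,3)] by metis
  with lambda_max_eq_top_eigenvalue[OF assms(1)] that show thesis by metis
qed

lemma sesq_lambda_max_eigenvector:
  assumes A: "A \<in> carrier_mat n n" and "sqnorm n u = 1"
    and "\<And>i. i < n \<Longrightarrow> (\<Sum>j<n. A$$(i,j) * u j) = of_real (lambda_max A) * u i"
  shows "sesq n A u u = of_real (lambda_max A)"
  using sesq_eigen[OF A assms(3)] assms(2) by simp

lemma psd_shift_mat_iff_lambda_max:
  assumes A: "A \<in> carrier_mat n n" "hermitian n A" and "0 < n"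
  shows "psd n (shift_mat n c A) \<longleftrightarrow> lambda_max A \<le> c"
proof
  assume "psd n (shift_mat n c A)"
  obtain u where u: "sqnorm n u = 1"
    "\<And>i. i < n \<Longrightarrow> (\<Sum>j<n. A$$(i,j) * u j) = of_real (lambda_max A) * u i"
    using lambda_max_eigenvector[OF assms] by blast
  show "lambda_max A \<le> c"
    using \<open>psd n (shift_mat n c A)\<close> sesq_lambda_max_eigenvector[OF A(1) u]
    unfolding psd_shift_mat_iff[OF A(2)] by (metis Re_complex_of_real mult_cancel_left1 u(1))
next
  assume "lambda_max A \<le> c"
  then have "Re (sesq n A x x) \<le> c * sqnorm n x" for x
    using sesq_le_lambda_max[OF assms] sqnorm_nonneg[of n x] by (meson mult_right_mono order.trans)
  then show "psd n (shift_mat n c A)" unfolding psd_shift_mat_iff[OF A(2)] by blast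
qed

section \<open>Density operators\<close>

lemma state_carrier: "\<sigma> \<in> states d \<Longrightarrow> \<sigma> \<in> carrier_mat d d"
  unfolding states_def psd_def by auto

lemma state_psd: "\<sigma> \<in> states d \<Longrightarrow> psd d \<sigma>"
  unfolding states_def by auto

lemma state_hermitian: "\<sigma> \<in> states d \<Longrightarrow> hermitian d \<sigma>"
  using state_psd psd_hermitian by blast

lemma state_trace: "\<sigma> \<in> states d \<Longrightarrow> (\<Sum>i<d. \<sigma>$$(i,i)) = 1"
  using state_carrier unfolding states_def mtrace_def by auto

lemma state_trace_Re: "\<sigma> \<in> states d \<Longrightarrow> (\<Sum>i<d. Re (\<sigma>$$(i,i))) = 1"
  using state_trace[of \<sigma> d] by (metis Re_sum one_complex.sel(1))

lemma state_diag_le_1: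
  assumes "\<sigma> \<in> states d" "i < d" shows "Re (\<sigma>$$(i,i)) \<le> 1"
proof -
  have "Re (\<sigma>$$(i,i)) \<le> (\<Sum>i<d. Re (\<sigma>$$(i,i)))"
    by (rule member_le_sum) (use assms psd_diag_real[OF state_psd] in auto)
  then show ?thesis unfolding state_trace_Re[OF assms(1)] .
qed

lemma state_entry_le_1:
  assumes s: "\<sigma> \<in> states d" and "i < d" "j < d" shows "cmod (\<sigma>$$(i,j)) \<le> 1"
proof -
  have "(cmod (\<sigma>$$(i,j)))^2 \<le> Re (\<sigma>$$(i,i)) * Re (\<sigma>$$(j,j))"
    using psd_cauchy_schwarz[OF state_psd[OF s], of "basis_fun i" "basis_fun j"] assms
    by (simp add: sesq_basis)
  also have "\<dots> \<le> 1 * 1"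
    using state_diag_le_1[OF s] psd_diag_real[OF state_psd[OF s]] assms(2,3) by (intro mult_mono) auto
  finally show ?thesis by (rule_tac power2_le_imp_le) simp_all
qed

lemma lambda_max_state_bounds:
  assumes s: "\<sigma> \<in> states d" and d: "0 < d"
  shows "1 \<le> real d * lambda_max \<sigma>" and "0 < lambda_max \<sigma>" and "lambda_max \<sigma> \<le> 1"
proof -
  note A = state_carrier[OF s] state_hermitian[OF s]
  have "Re (\<sigma>$$(i,i)) \<le> lambda_max \<sigma>" if "i < d" for i
    using sesq_le_lambda_max[OF A d, of "basis_fun i"] that by (simp add: sesq_basis sqnorm_basis_fun)
  then have "(\<Sum>i<d. Re (\<sigma>$$(i,i))) \<le> (\<Sum>i<d. lambda_max \<sigma>)" by (intro sum_mono) auto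
  then show lower: "1 \<le> real d * lambda_max \<sigma>" using state_trace_Re[OF s] by simp
  then show pos: "0 < lambda_max \<sigma>" by (metis not_less mult_nonneg_nonpos of_nat_0_le_iff not_one_le_zero order.trans)
  obtain u where u: "sqnorm d u = 1"
    "\<And>i. i < d \<Longrightarrow> (\<Sum>j<d. \<sigma>$$(i,j) * u j) = of_real (lambda_max \<sigma>) * u i"
    using lambda_max_eigenvector[OF A d] by blast
  note uu = sesq_lambda_max_eigenvector[OF A(1) u]
  \<comment> \<open>Cauchy-Schwarz applied to e_i and the top eigenvector u\<close>
  have "lambda_max \<sigma> * (cmod (u i))^2 \<le> Re (\<sigma>$$(i,i))" if i: "i < d" for i
  proof -
    have "(cmod (sesq d \<sigma> (basis_fun i) u))^2
        \<le> Re (sesq d \<sigma> (basis_fun i) (basis_fun i)) * Re (sesq d \<sigma> u u)"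
      by (rule psd_cauchy_schwarz[OF state_psd[OF s]])
    then have "(cmod (of_real (lambda_max \<sigma>) * u i))^2 \<le> Re (\<sigma>$$(i,i)) * lambda_max \<sigma>"
      unfolding sesq_basis[OF i i] unfolding sesq_basis_left[OF i] u(2)[OF i] using uu by simp
    then have "lambda_max \<sigma> * (lambda_max \<sigma> * (cmod (u i))^2) \<le> lambda_max \<sigma> * Re (\<sigma>$$(i,i))"
      using pos by (simp add: norm_mult power_mult_distrib power2_eq_square algebra_simps)
    then show ?thesis using pos by simp
  qed
  then have "(\<Sum>i<d. lambda_max \<sigma> * (cmod (u i))^2) \<le> (\<Sum>i<d. Re (\<sigma>$$(i,i)))"
    by (intro sum_mono) auto
  then show "lambda_max \<sigma> \<le> 1"
    using u(1) state_trace_Re[OF s] unfolding sqnorm_def by (simp add: sum_distrib_left[symmetric])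
qed

section \<open>Gram decomposition of positive matrices\<close>

lemma sesq_minus_rank_one:
  "sesq n (mat n n (\<lambda>(p,q). B$$(p,q) - w p * cnj (w q))) x y
   = sesq n B x y - (\<Sum>p<n. cnj (x p) * w p) * (\<Sum>q<n. cnj (w q) * y q)"
proof -
  have "sesq n (mat n n (\<lambda>(p,q). B$$(p,q) - w p * cnj (w q))) x y
      = (\<Sum>p<n. \<Sum>q<n. cnj (x p) * B$$(p,q) * y q - (cnj (x p) * w p) * (cnj (w q) * y q))"
    unfolding sesq_def by (intro sum.cong refl) (simp add: algebra_simps)
  also have "\<dots> = sesq n B x y - (\<Sum>p<n. \<Sum>q<n. (cnj (x p) * w p) * (cnj (w q) * y q))"
    unfolding sesq_def by (simp add: sum_subtractf)
  finally show ?thesis by (simp add: sum_product)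
qed

lemma psd_rank_one_deflation:
  assumes B: "psd n B" and k: "k < n" and pos: "Re (B$$(k,k)) > 0"
    and w_def: "w = (\<lambda>p. B$$(p,k) / of_real (sqrt (Re (B$$(k,k)))))"
  shows "psd n (mat n n (\<lambda>(p,q). B$$(p,q) - w p * cnj (w q)))"
    and "\<And>q. q < n \<Longrightarrow> w k * cnj (w q) = B$$(k,q)"
    and "\<And>p. w p * cnj (w k) = B$$(p,k)"
proof -
  define s where "s = sqrt (Re (B$$(k,k)))"
  have s: "s > 0" "s * s = Re (B$$(k,k))" unfolding s_def using pos by simp_all
  have wk: "w k = of_real s"
    unfolding w_def s_def[symmetric] using s psd_diag_real[OF B k]
    by (metis nonzero_mult_div_cancel_right of_real_eq_0_iff of_real_mult order_less_irrefl)
  have cw: "cnj (w q) = B$$(k,q) / of_real s" if "q < n" for q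
    unfolding w_def s_def[symmetric] using hermitianD[OF psd_hermitian[OF B] k that] by simp
  show "w k * cnj (w q) = B$$(k,q)" if "q < n" for q unfolding wk cw[OF that] using s by simp
  show "w p * cnj (w k) = B$$(p,k)" for p
  proof -
    have "w p * cnj (w k) = w p * of_real s" using wk by simp
    also have "\<dots> = B$$(p,k)" unfolding w_def s_def[symmetric] using s by simp
    finally show ?thesis .
  qed
  have row: "(\<Sum>q<n. cnj (w q) * x q) = sesq n B (basis_fun k) x / of_real s" for x
    unfolding sesq_basis_left[OF k] using cw by (simp add: sum_divide_distrib)
  show "psd n (mat n n (\<lambda>(p,q). B$$(p,q) - w p * cnj (w q)))"
    unfolding psd_iff_sesq
  proof (intro conjI allI)
    fix x
    define a where "a = sesq n B (basis_fun k) x / of_real s"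
    have "(\<Sum>p<n. cnj (x p) * w p) = cnj a"
      unfolding a_def row[symmetric] by (simp add: mult.commute)
    then have eq: "sesq n (mat n n (\<lambda>(p,q). B$$(p,q) - w p * cnj (w q))) x x
        = sesq n B x x - of_real ((cmod a)^2)"
      unfolding sesq_minus_rank_one row a_def[symmetric]
      by (metis complex_norm_square mult.commute of_real_power)
    have "(cmod a)^2 = (cmod (sesq n B (basis_fun k) x))^2 / (s * s)"
      unfolding a_def using s by (simp add: norm_divide power_divide power2_eq_square)
    also have "\<dots> \<le> Re (B$$(k,k)) * Re (sesq n B x x) / (s * s)"
      using psd_cauchy_schwarz[OF B, of "basis_fun k" x] s k pos
      by (intro divide_right_mono) (auto simp: sesq_basis)
    also have "\<dots> = Re (sesq n B x x)" unfolding s(2) using pos by simp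
    finally show "Im (sesq n (mat n n (\<lambda>(p,q). B$$(p,q) - w p * cnj (w q))) x x) = 0"
      and "Re (sesq n (mat n n (\<lambda>(p,q). B$$(p,q) - w p * cnj (w q))) x x) \<ge> 0"
      unfolding eq using psd_sesq_Im[OF B] by simp_all
  qed simp
qed

lemma psd_gram_tail:
  assumes "m \<le> n" and "psd n B" and "\<forall>p<n. \<forall>q<n. (p < n - m \<or> q < n - m) \<longrightarrow> B$$(p,q) = 0"
  shows "\<exists>W. \<forall>p<n. \<forall>q<n. B$$(p,q) = (\<Sum>r\<in>{n-m..<n}. W r p * cnj (W r q))"
  using assms
proof (induction m arbitrary: B)
  case 0
  show ?case by (intro exI[of _ "\<lambda>_ _. 0"]) (use 0 in auto)
next
  case (Suc m)
  define k where "k = n - Suc m"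
  have k: "k < n" "Suc k = n - m" "m \<le> n" and B: "psd n B"
    and zero: "\<forall>p<n. \<forall>q<n. (p < k \<or> q < k) \<longrightarrow> B$$(p,q) = 0"
    using Suc.prems unfolding k_def by auto
  have split: "{k..<n} = insert k {Suc k..<n}" using k by auto
  show ?case unfolding k_def[symmetric]
  proof (cases "Re (B$$(k,k)) = 0")
    case True
    \<comment> \<open>a zero diagonal entry kills its row and column, so the induction hypothesis applies to B\<close>
    have "\<forall>p<n. \<forall>q<n. (p < n - m \<or> q < n - m) \<longrightarrow> B$$(p,q) = 0"
      using zero psd_zero_diag_row[OF B k(1) _ True] unfolding k(2)[symmetric] less_Suc_eq by blast
    then obtain W where "\<forall>p<n. \<forall>q<n. B$$(p,q) = (\<Sum>r\<in>{Suc k..<n}. W r p * cnj (W r q))"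
      using Suc.IH[OF k(3) B] unfolding k(2) by blast
    then show "\<exists>W. \<forall>p<n. \<forall>q<n. B$$(p,q) = (\<Sum>r\<in>{k..<n}. W r p * cnj (W r q))"
      by (intro exI[of _ "W(k := (\<lambda>_. 0))"]) (simp add: split)
  next
    case False
    then have pos: "Re (B$$(k,k)) > 0" using psd_diag_real[OF B k(1)] by simp
    define w where "w = (\<lambda>p. B$$(p,k) / of_real (sqrt (Re (B$$(k,k)))))"
    define B' where "B' = mat n n (\<lambda>(p,q). B$$(p,q) - w p * cnj (w q))"
    note defl = psd_rank_one_deflation[OF B k(1) pos w_def, folded B'_def]
    have w0: "w p = 0" if "p < k" for p unfolding w_def using zero that k by simp
    have "B'$$(p,q) = 0" if "p < n" "q < n" "p < Suc k \<or> q < Suc k" for p q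
    proof -
      have "B$$(p,q) = w p * cnj (w q)"
        using that zero w0 defl(2)[of q] defl(3)[of p] unfolding less_Suc_eq by auto
      then show ?thesis unfolding B'_def using that by simp
    qed
    then have "\<forall>p<n. \<forall>q<n. (p < n - m \<or> q < n - m) \<longrightarrow> B'$$(p,q) = 0"
      unfolding k(2)[symmetric] by blast
    then obtain W where W: "\<forall>p<n. \<forall>q<n. B'$$(p,q) = (\<Sum>r\<in>{Suc k..<n}. W r p * cnj (W r q))"
      using Suc.IH[OF k(3) defl(1)] unfolding k(2) by blast
    have "B$$(p,q) = (\<Sum>r\<in>{k..<n}. (W(k := w)) r p * cnj ((W(k := w)) r q))" if "p < n" "q < n" for p q
      using W that unfolding split B'_def by (simp add: algebra_simps)
    then show "\<exists>W. \<forall>p<n. \<forall>q<n. B$$(p,q) = (\<Sum>r\<in>{k..<n}. W r p * cnj (W r q))" by blast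
  qed
qed

lemma psd_gram:
  assumes "psd n B"
  obtains W where "\<And>p q. p < n \<Longrightarrow> q < n \<Longrightarrow> B$$(p,q) = (\<Sum>r<n. W r p * cnj (W r q))"
  using psd_gram_tail[of n n B] assms by (auto simp: lessThan_atLeast0)

section \<open>Measure-and-prepare channels\<close>

lemma sum_blocks: "(\<Sum>I<k*d. g I) = (\<Sum>a<k. \<Sum>p<d. g (a*d + p :: nat))"
proof -
  have shift: "(\<Sum>I\<in>{m..<m+n}. g I) = (\<Sum>p<n. g (m + p))" for m n
    by (induct n) (simp_all add: add.commute)
  have "(\<Sum>I<k*d. g I) = (\<Sum>a<k. \<Sum>I\<in>{a*d..<a*d+d}. g I)" by (rule sum.nat_group[symmetric])
  then show ?thesis by (simp add: shift)
qed

lemma block_index: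
  assumes "a < k" "p < (d::nat)" shows "a*d + p < k*d" "(a*d + p) div d = a" "(a*d + p) mod d = p"
proof -
  have "a*d + p < Suc a * d" using assms by simp
  also have "Suc a * d \<le> k * d" using assms by (intro mult_le_mono1) simp
  finally show "a*d + p < k*d" .
qed (use assms in auto)

definition sub_block :: "nat \<Rightarrow> complex mat \<Rightarrow> nat \<Rightarrow> nat \<Rightarrow> complex mat" where
  "sub_block d N a b = mat d d (\<lambda>(p,q). N$$(a*d+p, b*d+q))"

lemma sesq_blocks:
  "sesq (k*d) N x y = (\<Sum>a<k. \<Sum>b<k. sesq d (sub_block d N a b) (\<lambda>p. x (a*d+p)) (\<lambda>q. y (b*d+q)))"
proof -
  have "sesq (k*d) N x y
      = (\<Sum>a<k. \<Sum>p<d. \<Sum>b<k. \<Sum>q<d. cnj (x (a*d+p)) * N$$(a*d+p, b*d+q) * y (b*d+q))"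
    unfolding sesq_def sum_blocks ..
  also have "\<dots> = (\<Sum>a<k. \<Sum>b<k. \<Sum>p<d. \<Sum>q<d. cnj (x (a*d+p)) * N$$(a*d+p, b*d+q) * y (b*d+q))"
    by (rule sum.cong[OF refl]) (rule sum.swap)
  finally show ?thesis unfolding sesq_def sub_block_def by simp
qed

lemma sub_block_ampl:
  assumes "a < k" "b < k" and E: "E (sub_block d M a b) \<in> carrier_mat d d"
  shows "sub_block d (ampl d k E M) a b = E (sub_block d M a b)"
proof (rule eq_matI)
  fix p q assume "p < dim_row (E (sub_block d M a b))" "q < dim_col (E (sub_block d M a b))"
  then have "p < d" "q < d" using E by auto
  with block_index[OF assms(1)] block_index[OF assms(2)]
  show "sub_block d (ampl d k E M) a b $$ (p, q) = E (sub_block d M a b) $$ (p, q)"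
    unfolding sub_block_def ampl_def by simp
qed (use E in \<open>auto simp: sub_block_def\<close>)

lemma sesq_gram:
  assumes "\<And>p q. p < d \<Longrightarrow> q < d \<Longrightarrow> B$$(p,q) = (\<Sum>r<d. W r p * cnj (W r q))"
  shows "sesq d B x y = (\<Sum>r<d. cnj (\<Sum>q<d. cnj (W r q) * x q) * (\<Sum>q<d. cnj (W r q) * y q))"
proof -
  have "sesq d B x y = (\<Sum>p<d. \<Sum>q<d. \<Sum>r<d. (cnj (x p) * W r p) * (cnj (W r q) * y q))"
    unfolding sesq_def using assms
    by (intro sum.cong refl) (simp add: sum_distrib_left sum_distrib_right mult.assoc mult.left_commute)
  also have "\<dots> = (\<Sum>p<d. \<Sum>r<d. \<Sum>q<d. (cnj (x p) * W r p) * (cnj (W r q) * y q))"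
    by (rule sum.cong[OF refl]) (rule sum.swap)
  also have "\<dots> = (\<Sum>r<d. \<Sum>p<d. \<Sum>q<d. (cnj (x p) * W r p) * (cnj (W r q) * y q))"
    by (rule sum.swap)
  also have "\<dots> = (\<Sum>r<d. (\<Sum>p<d. cnj (x p) * W r p) * (\<Sum>q<d. cnj (W r q) * y q))"
    by (simp add: sum_product)
  finally show ?thesis by (simp add: mult.commute)
qed

lemma sesq_diag_block_vector:
  assumes "i < d"
  shows "sesq (k*d) M (\<lambda>I. z (I div d) * basis_fun i (I mod d)) (\<lambda>I. z (I div d) * basis_fun i (I mod d))
       = (\<Sum>a<k. \<Sum>b<k. M$$(a*d+i, b*d+i) * (cnj (z a) * z b))"
  unfolding sesq_blocks
proof (intro sum.cong refl)
  fix a b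
  have "sesq d (sub_block d M a b) (\<lambda>p. z ((a*d+p) div d) * basis_fun i ((a*d+p) mod d))
        (\<lambda>q. z ((b*d+q) div d) * basis_fun i ((b*d+q) mod d))
      = sesq d (sub_block d M a b) (\<lambda>p. z a * basis_fun i p) (\<lambda>q. z b * basis_fun i q)"
    by (rule sesq_cong) auto
  also have "\<dots> = M$$(a*d+i, b*d+i) * (cnj (z a) * z b)"
    using assms by (simp add: sesq_scale_left sesq_scale_right sesq_basis sub_block_def)
  finally show "sesq d (sub_block d M a b) (\<lambda>p. z ((a*d+p) div d) * basis_fun i ((a*d+p) mod d))
        (\<lambda>q. z ((b*d+q) div d) * basis_fun i ((b*d+q) mod d)) = M$$(a*d+i, b*d+i) * (cnj (z a) * z b)" .
qed

definition measure_prepare :: "nat \<Rightarrow> (nat \<Rightarrow> complex mat) \<Rightarrow> complex mat \<Rightarrow> complex mat" where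
  "measure_prepare d B X = mat d d (\<lambda>(p,q). \<Sum>i<d. X$$(i,i) * B i $$ (p,q))"

lemma measure_prepare_carrier: "measure_prepare d B X \<in> carrier_mat d d"
  unfolding measure_prepare_def by simp

lemma measure_prepare_index:
  "p < d \<Longrightarrow> q < d \<Longrightarrow> measure_prepare d B X $$ (p,q) = (\<Sum>i<d. X$$(i,i) * B i $$ (p,q))"
  unfolding measure_prepare_def by simp

lemma measure_prepare_linear: "linear_map d (measure_prepare d B)"
  unfolding linear_map_def
proof (intro conjI ballI allI)
  fix X Y :: "complex mat" assume X: "X \<in> carrier_mat d d" and Y: "Y \<in> carrier_mat d d"
  show "measure_prepare d B (X + Y) = measure_prepare d B X + measure_prepare d B Y"
  proof (rule eq_matI)
    fix p q assume "p < dim_row (measure_prepare d B X + measure_prepare d B Y)"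
      "q < dim_col (measure_prepare d B X + measure_prepare d B Y)"
    then have pq: "p < d" "q < d" by (simp_all add: measure_prepare_def)
    have "measure_prepare d B (X + Y) $$ (p,q) = (\<Sum>i<d. (X$$(i,i) + Y$$(i,i)) * B i $$ (p,q))"
      unfolding measure_prepare_index[OF pq] using X Y by (intro sum.cong refl) simp
    then show "measure_prepare d B (X + Y) $$ (p,q) = (measure_prepare d B X + measure_prepare d B Y) $$ (p,q)"
      using pq by (simp add: measure_prepare_index distrib_right sum.distrib measure_prepare_def)
  qed (simp_all add: measure_prepare_def)
  show "measure_prepare d B (c \<cdot>\<^sub>m X) = c \<cdot>\<^sub>m measure_prepare d B X" for c
  proof (rule eq_matI)
    fix p q assume "p < dim_row (c \<cdot>\<^sub>m measure_prepare d B X)" "q < dim_col (c \<cdot>\<^sub>m measure_prepare d B X)"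
    then have pq: "p < d" "q < d" by (simp_all add: measure_prepare_def)
    have "measure_prepare d B (c \<cdot>\<^sub>m X) $$ (p,q) = (\<Sum>i<d. c * (X$$(i,i) * B i $$ (p,q)))"
      unfolding measure_prepare_index[OF pq] using X by (intro sum.cong refl) simp
    then show "measure_prepare d B (c \<cdot>\<^sub>m X) $$ (p,q) = (c \<cdot>\<^sub>m measure_prepare d B X) $$ (p,q)"
      using pq by (simp add: measure_prepare_index sum_distrib_left measure_prepare_def)
  qed (simp_all add: measure_prepare_def)
qed (rule measure_prepare_carrier)

lemma measure_prepare_trace_preserving:
  assumes "\<And>i. i < d \<Longrightarrow> (\<Sum>p<d. B i $$ (p,p)) = 1"
  shows "trace_preserving d (measure_prepare d B)"
  unfolding trace_preserving_def
proof
  fix X :: "complex mat" assume X: "X \<in> carrier_mat d d"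
  have "mtrace (measure_prepare d B X) = (\<Sum>p<d. \<Sum>i<d. X$$(i,i) * B i $$ (p,p))"
    unfolding mtrace_def by (simp add: measure_prepare_def)
  also have "\<dots> = (\<Sum>i<d. X$$(i,i) * (\<Sum>p<d. B i $$ (p,p)))"
    by (subst sum.swap) (simp add: sum_distrib_left)
  also have "\<dots> = mtrace X" unfolding mtrace_def using assms X by simp
  finally show "mtrace (measure_prepare d B X) = mtrace X" .
qed

lemma sesq_ampl_measure_prepare:
  fixes v :: "nat \<Rightarrow> complex"
  assumes d: "0 < d"
    and gram: "\<And>i p q. i < d \<Longrightarrow> p < d \<Longrightarrow> q < d \<Longrightarrow> B i $$ (p,q) = (\<Sum>r<d. W i r p * cnj (W i r q))"
  defines "Z \<equiv> \<lambda>i r a. \<Sum>q<d. cnj (W i r q) * v (a*d+q)"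
  shows "sesq (k*d) (ampl d k (measure_prepare d B) M) v v
       = (\<Sum>i<d. \<Sum>r<d. \<Sum>a<k. \<Sum>b<k. M$$(a*d+i, b*d+i) * (cnj (Z i r a) * Z i r b))"
proof -
  have "sesq (k*d) (ampl d k (measure_prepare d B) M) v v
      = (\<Sum>a<k. \<Sum>b<k. sesq d (measure_prepare d B (sub_block d M a b)) (\<lambda>p. v (a*d+p)) (\<lambda>q. v (b*d+q)))"
    unfolding sesq_blocks by (intro sum.cong refl) (simp add: sub_block_ampl measure_prepare_carrier)
  also have "\<dots> = (\<Sum>a<k. \<Sum>b<k. \<Sum>i<d. \<Sum>r<d. M$$(a*d+i, b*d+i) * (cnj (Z i r a) * Z i r b))"
  proof (intro sum.cong refl)
    fix a b
    have "sesq d (measure_prepare d B (sub_block d M a b)) (\<lambda>p. v (a*d+p)) (\<lambda>q. v (b*d+q))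
        = (\<Sum>i<d. sub_block d M a b $$ (i,i) * sesq d (B i) (\<lambda>p. v (a*d+p)) (\<lambda>q. v (b*d+q)))"
      unfolding measure_prepare_def by (rule sesq_mat_sum)
    also have "\<dots> = (\<Sum>i<d. \<Sum>r<d. M$$(a*d+i, b*d+i) * (cnj (Z i r a) * Z i r b))"
      using sesq_gram[OF gram] unfolding Z_def by (simp add: sub_block_def sum_distrib_left)
    finally show "sesq d (measure_prepare d B (sub_block d M a b)) (\<lambda>p. v (a*d+p)) (\<lambda>q. v (b*d+q))
        = (\<Sum>i<d. \<Sum>r<d. M$$(a*d+i, b*d+i) * (cnj (Z i r a) * Z i r b))" .
  qed
  also have "\<dots> = (\<Sum>a<k. \<Sum>i<d. \<Sum>b<k. \<Sum>r<d. M$$(a*d+i, b*d+i) * (cnj (Z i r a) * Z i r b))"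
    by (rule sum.cong[OF refl]) (rule sum.swap)
  also have "\<dots> = (\<Sum>i<d. \<Sum>a<k. \<Sum>b<k. \<Sum>r<d. M$$(a*d+i, b*d+i) * (cnj (Z i r a) * Z i r b))"
    by (rule sum.swap)
  also have "\<dots> = (\<Sum>i<d. \<Sum>a<k. \<Sum>r<d. \<Sum>b<k. M$$(a*d+i, b*d+i) * (cnj (Z i r a) * Z i r b))"
    by (rule sum.cong[OF refl], rule sum.cong[OF refl], rule sum.swap)
  also have "\<dots> = (\<Sum>i<d. \<Sum>r<d. \<Sum>a<k. \<Sum>b<k. M$$(a*d+i, b*d+i) * (cnj (Z i r a) * Z i r b))"
    by (rule sum.cong[OF refl]) (rule sum.swap)
  finally show ?thesis .
qed

lemma measure_prepare_completely_positive:
  assumes d: "0 < d" and B: "\<And>i. i < d \<Longrightarrow> psd d (B i)"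
  shows "completely_positive d (measure_prepare d B)"
  unfolding completely_positive_def
proof (intro allI impI)
  fix k M assume M: "psd (k*d) M"
  have "\<forall>i. \<exists>Wi. i < d \<longrightarrow> (\<forall>p<d. \<forall>q<d. B i $$ (p,q) = (\<Sum>r<d. Wi r p * cnj (Wi r q)))"
    using psd_gram B by metis
  then obtain W where W: "\<And>i p q. i < d \<Longrightarrow> p < d \<Longrightarrow> q < d \<Longrightarrow> B i $$ (p,q) = (\<Sum>r<d. W i r p * cnj (W i r q))"
    by metis
  show "psd (k*d) (ampl d k (measure_prepare d B) M)"
    unfolding psd_iff_sesq
  proof (intro conjI allI)
    fix v
    define Z where "Z i r a = (\<Sum>q<d. cnj (W i r q) * v (a*d+q))" for i r a
    define y where "y i r I = Z i r (I div d) * basis_fun i (I mod d)" for i r I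
    \<comment> \<open>the form of the amplified map is a sum of forms of M, one for each outcome i and Gram index r\<close>
    have "sesq (k*d) (ampl d k (measure_prepare d B) M) v v
        = (\<Sum>i<d. \<Sum>r<d. \<Sum>a<k. \<Sum>b<k. M$$(a*d+i, b*d+i) * (cnj (Z i r a) * Z i r b))"
      unfolding Z_def by (rule sesq_ampl_measure_prepare[OF d W])
    also have "\<dots> = (\<Sum>i<d. \<Sum>r<d. sesq (k*d) M (y i r) (y i r))"
    proof (intro sum.cong refl)
      fix i r assume "i \<in> {..<d}"
      then show "(\<Sum>a<k. \<Sum>b<k. M$$(a*d+i, b*d+i) * (cnj (Z i r a) * Z i r b)) = sesq (k*d) M (y i r) (y i r)"
        using sesq_diag_block_vector[of i d k M "Z i r"] unfolding y_def by simp
    qed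
    finally have form: "sesq (k*d) (ampl d k (measure_prepare d B) M) v v
        = (\<Sum>i<d. \<Sum>r<d. sesq (k*d) M (y i r) (y i r))" .
    show "Im (sesq (k*d) (ampl d k (measure_prepare d B) M) v v) = 0"
      unfolding form using psd_sesq_Im[OF M] by (simp add: Im_sum)
    show "Re (sesq (k*d) (ampl d k (measure_prepare d B) M) v v) \<ge> 0"
      unfolding form using psd_sesq_nonneg[OF M] by (simp add: Re_sum sum_nonneg)
  qed (simp add: ampl_def)
qed

section \<open>Converting the currency into a state\<close>

lemma psd_mat_scale:
  assumes "psd n B" "c \<ge> 0" shows "psd n (mat n n (\<lambda>(i,j). of_real c * B$$(i,j)))"
  unfolding psd_iff_sesq sesq_mat_scale using assms psd_sesq_Im[OF assms(1)] psd_sesq_nonneg[OF assms(1)] by simp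

lemma psd_diag_indicator: "psd n (mat n n (\<lambda>(i,j). if i = j \<and> P i then 1 else 0))"
  unfolding psd_iff_sesq
proof (intro conjI allI)
  fix x
  have "sesq n (mat n n (\<lambda>(i,j). if i = j \<and> P i then 1 else 0)) x x
      = (\<Sum>i<n. if P i then of_real ((cmod (x i))^2) else 0)"
    unfolding sesq_def
  proof (intro sum.cong refl)
    fix i assume "i \<in> {..<n}"
    then have "(\<Sum>j<n. cnj (x i) * mat n n (\<lambda>(i,j). if i = j \<and> P i then 1 else 0) $$ (i, j) * x j)
        = (\<Sum>j<n. if j = i then (if P i then cnj (x i) * x i else 0) else 0)"
      by (intro sum.cong refl) auto
    also have "\<dots> = (if P i then of_real ((cmod (x i))^2) else 0)"
      using \<open>i \<in> {..<n}\<close> by (simp add: mult.commute flip: complex_norm_square)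
    finally show "(\<Sum>j<n. cnj (x i) * mat n n (\<lambda>(i,j). if i = j \<and> P i then 1 else 0) $$ (i, j) * x j)
        = (if P i then of_real ((cmod (x i))^2) else 0)" .
  qed
  also have "\<dots> = of_real (\<Sum>i<n. if P i then (cmod (x i))^2 else 0)"
    by (simp add: if_distrib[of of_real] cong: if_cong)
  finally have eq: "sesq n (mat n n (\<lambda>(i,j). if i = j \<and> P i then 1 else 0)) x x
      = of_real (\<Sum>i<n. if P i then (cmod (x i))^2 else 0)" .
  show "Im (sesq n (mat n n (\<lambda>(i,j). if i = j \<and> P i then 1 else 0)) x x) = 0" unfolding eq by simp
  show "Re (sesq n (mat n n (\<lambda>(i,j). if i = j \<and> P i then 1 else 0)) x x) \<ge> 0"
    unfolding eq by (simp add: sum_nonneg)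
qed simp

lemma ampl_one:
  assumes "N \<in> carrier_mat d d" "E N \<in> carrier_mat d d"
  shows "ampl d 1 E N = E N"
proof -
  have "mat d d (\<lambda>(p,q). N $$ ((i div d) * d + p, (j div d) * d + q)) = N" if "i < d" "j < d" for i j
    using that assms(1) by (intro eq_matI) auto
  then show ?thesis using assms(2) by (intro eq_matI) (auto simp: ampl_def)
qed

lemma channel_bound:
  assumes k: "1 \<le> k" "k \<le> d" and E: "unital_cptp d E"
    and s: "\<sigma> \<in> states d" and img: "E ((1 / of_nat k) \<cdot>\<^sub>m proj d k) = \<sigma>"
  shows "lambda_max \<sigma> \<le> 1 / real k"
proof -
  have d: "0 < d" using k by simp
  have cp: "completely_positive d E" and unital: "E (1\<^sub>m d) = 1\<^sub>m d"
    and carrier: "\<And>A. A \<in> carrier_mat d d \<Longrightarrow> E A \<in> carrier_mat d d"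
    and add: "\<And>A B. A \<in> carrier_mat d d \<Longrightarrow> B \<in> carrier_mat d d \<Longrightarrow> E (A + B) = E A + E B"
    and scale: "\<And>A c. A \<in> carrier_mat d d \<Longrightarrow> E (c \<cdot>\<^sub>m A) = c \<cdot>\<^sub>m E A"
    using E unfolding unital_cptp_def unital_def linear_map_def by auto
  note \<sigma> = state_carrier[OF s]
  define P where "P = proj d k"
  define N where "N = mat d d (\<lambda>(i,j). if i = j \<and> k \<le> i then (1::complex) else 0)"
  have P: "P \<in> carrier_mat d d" and N: "N \<in> carrier_mat d d" unfolding P_def proj_def N_def by simp_all
  have "E P = of_nat k \<cdot>\<^sub>m \<sigma>"
  proof -
    have "P = of_nat k \<cdot>\<^sub>m ((1 / of_nat k) \<cdot>\<^sub>m P)" using k P by (intro eq_matI) auto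
    then show ?thesis using scale P img unfolding P_def by (metis smult_carrier_mat)
  qed
  moreover have "1\<^sub>m d = N + P" unfolding N_def P_def proj_def by (intro eq_matI) auto
  ultimately have "1\<^sub>m d = E N + of_nat k \<cdot>\<^sub>m \<sigma>" using unital add[OF N P] by simp
  \<comment> \<open>E maps the complementary projector 1 - \<Pi>k to 1 - k\<sigma>, which must be positive\<close>
  then have EN: "E N = mat d d (\<lambda>(p,q). 1 * (1\<^sub>m d)$$(p,q) + (- of_nat k) * \<sigma>$$(p,q))"
    using carrier[OF N] \<sigma> by (intro eq_matI) (auto simp: mat_eq_iff)
  have "psd (1*d) N" using psd_diag_indicator[of d "\<lambda>i. k \<le> i"] unfolding N_def by simp
  with cp have "psd (1*d) (ampl d 1 E N)" unfolding completely_positive_def by blast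
  then have "psd d (E N)" unfolding ampl_one[where E = E, OF N carrier[OF N]] by simp
  obtain u where u: "sqnorm d u = 1"
    "\<And>i. i < d \<Longrightarrow> (\<Sum>j<d. \<sigma>$$(i,j) * u j) = of_real (lambda_max \<sigma>) * u i"
    using lambda_max_eigenvector[OF \<sigma> state_hermitian[OF s] d] by blast
  have "0 \<le> Re (sesq d (E N) u u)" by (rule psd_sesq_nonneg[OF \<open>psd d (E N)\<close>])
  also have "sesq d (E N) u u = 1 - of_nat k * of_real (lambda_max \<sigma>)"
    unfolding EN sesq_mat_lincomb sesq_one_self u(1) using sesq_lambda_max_eigenvector[OF \<sigma> u] by simp
  finally have "real k * lambda_max \<sigma> \<le> 1" by simp
  then show ?thesis using k by (simp add: field_simps)
qed

lemma state_eq_maximally_mixed: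
  assumes s: "\<sigma> \<in> states d" and d: "0 < d" and "lambda_max \<sigma> \<le> 1 / real d" and pq: "p < d" "q < d"
  shows "\<sigma>$$(p,q) = (if p = q then 1 / of_nat d else 0)"
proof -
  define T where "T = shift_mat d (1 / real d) \<sigma>"
  have T: "psd d T"
    unfolding T_def using psd_shift_mat_iff_lambda_max[OF state_carrier[OF s] state_hermitian[OF s] d] assms(3)
    by simp
  \<comment> \<open>1/d - \<sigma> is positive with trace zero, hence zero\<close>
  have "(\<Sum>p<d. Re (T$$(p,p))) = (\<Sum>p<d. 1 / real d) - (\<Sum>p<d. Re (\<sigma>$$(p,p)))"
    unfolding T_def by (simp add: shift_mat_index sum_subtractf)
  also have "\<dots> = 0" unfolding state_trace_Re[OF s] using d by simp
  finally have "Re (T$$(p,p)) = 0" using pq psd_diag_real[OF T] by (subst (asm) sum_nonneg_eq_0_iff) auto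
  then have "T$$(p,q) = 0" using psd_zero_diag_row(1)[OF T pq] by simp
  then show ?thesis unfolding T_def shift_mat_index[OF pq] by (auto simp: of_real_divide)
qed

definition prepare_states :: "nat \<Rightarrow> nat \<Rightarrow> complex mat \<Rightarrow> nat \<Rightarrow> complex mat" where
  "prepare_states d k \<sigma> i = (if i < k then \<sigma> else
     mat d d (\<lambda>(p,q). of_real (real k / (real d - real k)) * shift_mat d (1 / real k) \<sigma> $$ (p,q)))"

lemma prepare_states_psd:
  assumes s: "\<sigma> \<in> states d" and "lambda_max \<sigma> \<le> 1 / real k" and "i < d"
  shows "psd d (prepare_states d k \<sigma> i)"
proof (cases "i < k")
  case False
  have "psd d (shift_mat d (1 / real k) \<sigma>)"
    using psd_shift_mat_iff_lambda_max[OF state_carrier[OF s] state_hermitian[OF s]] assms by simp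
  then show ?thesis
    unfolding prepare_states_def if_not_P[OF False]
    by (rule psd_mat_scale) (use False \<open>i < d\<close> in simp)
qed (use s in \<open>simp add: prepare_states_def state_psd\<close>)

lemma prepare_states_trace:
  assumes s: "\<sigma> \<in> states d" and "1 \<le> k" "i < d"
  shows "(\<Sum>p<d. prepare_states d k \<sigma> i $$ (p,p)) = 1"
proof (cases "i < k")
  case False
  define c where "c = real k / (real d - real k)"
  have "(\<Sum>p<d. prepare_states d k \<sigma> i $$ (p,p)) = (\<Sum>p<d. of_real c * (of_real (1 / real k) - \<sigma>$$(p,p)))"
    unfolding prepare_states_def c_def[symmetric] using False by (simp add: shift_mat_index)
  also have "\<dots> = of_real (c * (real d * (1 / real k) - 1))"
    unfolding sum_distrib_left[symmetric] sum_subtractf state_trace[OF s] by simp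
  also have "c * (real d * (1 / real k) - 1) = 1"
    unfolding c_def using False assms by (simp add: field_simps)
  finally show ?thesis by simp
qed (use s in \<open>simp add: prepare_states_def state_trace\<close>)

lemma sum_lessThan_split: "(k::nat) \<le> d \<Longrightarrow> (\<Sum>i<d. f i) = (\<Sum>i<k. f i) + (\<Sum>i\<in>{k..<d}. f i)"
  using sum.atLeastLessThan_concat[of 0 k d f] by (simp add: lessThan_atLeast0)

lemma measure_prepare_states_unital:
  assumes s: "\<sigma> \<in> states d" and k: "1 \<le> k" "k \<le> d" and "lambda_max \<sigma> \<le> 1 / real k"
  shows "measure_prepare d (prepare_states d k \<sigma>) (1\<^sub>m d) = 1\<^sub>m d"
proof (rule eq_matI)
  fix p q assume "p < dim_row (1\<^sub>m d)" "q < dim_col (1\<^sub>m d)"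
  then have pq: "p < d" "q < d" by auto
  have "measure_prepare d (prepare_states d k \<sigma>) (1\<^sub>m d) $$ (p,q) = (\<Sum>i<d. prepare_states d k \<sigma> i $$ (p,q))"
    unfolding measure_prepare_index[OF pq] by simp
  also have "\<dots> = (if p = q then 1 else 0)"
  proof (cases "k = d")
    case True
    then show ?thesis
      using state_eq_maximally_mixed[OF s _ _ pq] assms by (simp add: prepare_states_def)
  next
    case False
    define e where "e = (if p = q then of_real (1 / real k) else (0::complex))"
    have "real (d - k) * (real k / (real d - real k)) = real k" using False k by (simp add: of_nat_diff)
    then have "of_nat (d - k) * of_real (real k / (real d - real k)) = (of_nat k :: complex)"
      by (metis of_real_mult of_real_of_nat_eq)
    \<comment> \<open>k copies of \<sigma> and d - k copies of (1/k - \<sigma>) k/(d - k) add up to the identity\<close>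
    moreover have "(\<Sum>i\<in>{k..<d}. prepare_states d k \<sigma> i $$ (p,q))
        = of_nat (d - k) * of_real (real k / (real d - real k)) * (e - \<sigma>$$(p,q))"
      using pq by (simp add: prepare_states_def shift_mat_index e_def)
    ultimately show ?thesis
      unfolding sum_lessThan_split[OF k(2)] using k by (simp add: prepare_states_def e_def algebra_simps)
  qed
  finally show "measure_prepare d (prepare_states d k \<sigma>) (1\<^sub>m d) $$ (p,q) = 1\<^sub>m d $$ (p,q)"
    using pq by simp
qed (simp_all add: measure_prepare_def)

lemma measure_prepare_states_image:
  assumes s: "\<sigma> \<in> states d" and k: "1 \<le> k" "k \<le> d"
  shows "measure_prepare d (prepare_states d k \<sigma>) ((1 / of_nat k) \<cdot>\<^sub>m proj d k) = \<sigma>"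
proof (rule eq_matI)
  fix p q assume "p < dim_row \<sigma>" "q < dim_col \<sigma>"
  then have pq: "p < d" "q < d" using state_carrier[OF s] by auto
  have "measure_prepare d (prepare_states d k \<sigma>) ((1 / of_nat k) \<cdot>\<^sub>m proj d k) $$ (p,q)
      = (\<Sum>i<d. (if i < k then (1 / of_nat k) * \<sigma>$$(p,q) else 0))"
    unfolding measure_prepare_index[OF pq] by (intro sum.cong refl) (simp add: proj_def prepare_states_def)
  also have "\<dots> = \<sigma>$$(p,q)" unfolding sum_lessThan_split[OF k(2)] using k by simp
  finally show "measure_prepare d (prepare_states d k \<sigma>) ((1 / of_nat k) \<cdot>\<^sub>m proj d k) $$ (p,q) = \<sigma>$$(p,q)" .
qed (use state_carrier[OF s] in \<open>simp_all add: measure_prepare_def\<close>)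

lemma channel_exists:
  assumes k: "1 \<le> k" "k \<le> d" and s: "\<sigma> \<in> states d" and l: "lambda_max \<sigma> \<le> 1 / real k"
  shows "\<exists>E. unital_cptp d E \<and> E ((1 / of_nat k) \<cdot>\<^sub>m proj d k) = \<sigma>"
proof (intro exI conjI)
  have "0 < d" using k by simp
  then show "unital_cptp d (measure_prepare d (prepare_states d k \<sigma>))"
    unfolding unital_cptp_def unital_def
    using measure_prepare_linear measure_prepare_completely_positive prepare_states_psd[OF s l]
      measure_prepare_trace_preserving prepare_states_trace[OF s k(1)]
      measure_prepare_states_unital[OF s k l]
    by blast
qed (rule measure_prepare_states_image[OF s k])

lemma converts_iff_lambda_max:
  assumes k: "1 \<le> k" "k \<le> d" and V: "V \<subseteq> states d"
  shows "converts d (Ccur d k) V \<longleftrightarrow> (\<exists>\<sigma>\<in>V. lambda_max \<sigma> \<le> 1 / real k)"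
proof
  assume "converts d (Ccur d k) V"
  then obtain E where E: "unital_cptp d E" and "E ((1 / of_nat k) \<cdot>\<^sub>m proj d k) \<in> V"
    unfolding converts_def Ccur_def by auto
  with channel_bound[OF k E] V show "\<exists>\<sigma>\<in>V. lambda_max \<sigma> \<le> 1 / real k" by blast
next
  assume "\<exists>\<sigma>\<in>V. lambda_max \<sigma> \<le> 1 / real k"
  with channel_exists[OF k] V show "converts d (Ccur d k) V"
    unfolding converts_def Ccur_def by fastforce
qed

lemma maximally_mixed_state:
  assumes "0 < d" shows "(1 / of_nat d) \<cdot>\<^sub>m proj d d \<in> states d"
proof -
  have eq: "(1 / of_nat d) \<cdot>\<^sub>m proj d d = mat d d (\<lambda>(i,j). of_real (1 / real d) * (1\<^sub>m d)$$(i,j))"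
    unfolding proj_def by (intro eq_matI) auto
  have "psd d ((1 / of_nat d) \<cdot>\<^sub>m proj d d)"
    unfolding eq psd_iff_sesq sesq_mat_scale sesq_one_self using sqnorm_nonneg by simp
  moreover have "mtrace ((1 / of_nat d) \<cdot>\<^sub>m proj d d) = 1"
    unfolding mtrace_def proj_def using assms by simp
  ultimately show ?thesis unfolding states_def by simp
qed

lemma converts_states_imp_maximally_mixed:
  "0 < d \<Longrightarrow> converts d (states d) V \<Longrightarrow> converts d (Ccur d d) V"
  using maximally_mixed_state unfolding converts_def Ccur_def by auto

section \<open>Minimising the largest eigenvalue over the ball\<close>

lemma sesq_tendsto:
  assumes "\<And>i j. i < n \<Longrightarrow> j < n \<Longrightarrow> (\<lambda>k. A k $$ (i,j)) \<longlonglongrightarrow> B $$ (i,j)"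
  shows "(\<lambda>k. sesq n (A k) x y) \<longlonglongrightarrow> sesq n B x y"
  unfolding sesq_def by (intro tendsto_sum tendsto_mult tendsto_const assms) auto

lemma states_convergent_subseq:
  fixes X :: "nat \<Rightarrow> complex mat"
  assumes "\<And>k. X k \<in> states d"
  obtains r \<sigma> where "strict_mono r" "\<sigma> \<in> carrier_mat d d"
    "\<And>i j. i < d \<Longrightarrow> j < d \<Longrightarrow> (\<lambda>k. X (r k) $$ (i,j)) \<longlonglongrightarrow> \<sigma> $$ (i,j)"
proof -
  obtain r where r: "strict_mono r" "\<forall>c\<in>{..<d} \<times> {..<d}. \<exists>l. (\<lambda>k. X (r k) $$ c) \<longlonglongrightarrow> l"
    using convergent_subseq_finite[of "{..<d} \<times> {..<d}" "\<lambda>k c. X k $$ c" 1]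
      state_entry_le_1[OF assms] by fastforce
  define \<sigma> where "\<sigma> = mat d d (\<lambda>c. lim (\<lambda>k. X (r k) $$ c))"
  have conv: "(\<lambda>k. X (r k) $$ (i,j)) \<longlonglongrightarrow> \<sigma> $$ (i,j)" if "i < d" "j < d" for i j
    using r(2) that unfolding \<sigma>_def
    by (auto intro: limI simp: convergent_LIMSEQ_iff[symmetric] convergent_def)
  show thesis by (rule that[OF r(1) _ conv]) (simp_all add: \<sigma>_def)
qed

lemma state_limit:
  assumes X: "\<And>k. X k \<in> states d" and \<sigma>: "\<sigma> \<in> carrier_mat d d"
    and conv: "\<And>i j. i < d \<Longrightarrow> j < d \<Longrightarrow> (\<lambda>k. X k $$ (i,j)) \<longlonglongrightarrow> \<sigma> $$ (i,j)"
  shows "\<sigma> \<in> states d"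
proof -
  have psd: "psd d \<sigma>"
    unfolding psd_iff_sesq
  proof (intro conjI allI \<sigma>)
    fix x
    have lim: "(\<lambda>k. sesq d (X k) x x) \<longlonglongrightarrow> sesq d \<sigma> x x" by (rule sesq_tendsto[OF conv])
    have "(\<lambda>k. Im (sesq d (X k) x x)) \<longlonglongrightarrow> Im (sesq d \<sigma> x x)" by (rule tendsto_Im[OF lim])
    moreover have "(\<lambda>k. Im (sesq d (X k) x x)) = (\<lambda>k. 0)" using psd_sesq_Im[OF state_psd[OF X]] by simp
    ultimately show "Im (sesq d \<sigma> x x) = 0" using LIMSEQ_unique tendsto_const by metis
    have "(\<lambda>k. Re (sesq d (X k) x x)) \<longlonglongrightarrow> Re (sesq d \<sigma> x x)" by (rule tendsto_Re[OF lim])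
    then show "Re (sesq d \<sigma> x x) \<ge> 0"
      by (rule LIMSEQ_le_const) (use psd_sesq_nonneg[OF state_psd[OF X]] in auto)
  qed
  have "(\<lambda>k. \<Sum>i<d. X k $$ (i,i)) \<longlonglongrightarrow> (\<Sum>i<d. \<sigma> $$ (i,i))"
    by (intro tendsto_sum conv) auto
  moreover have "(\<lambda>k. \<Sum>i<d. X k $$ (i,i)) = (\<lambda>k. 1)" using state_trace[OF X] by simp
  ultimately have "(\<Sum>i<d. \<sigma> $$ (i,i)) = 1" using LIMSEQ_unique tendsto_const by metis
  with psd show ?thesis unfolding states_def mtrace_def using \<sigma> by simp
qed

lemma lambda_max_le_limit:
  assumes d: "0 < d" and X: "\<And>k. X k \<in> states d" and \<sigma>: "\<sigma> \<in> states d"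
    and conv: "\<And>i j. i < d \<Longrightarrow> j < d \<Longrightarrow> (\<lambda>k. X k $$ (i,j)) \<longlonglongrightarrow> \<sigma> $$ (i,j)"
    and lim: "(\<lambda>k. lambda_max (X k)) \<longlonglongrightarrow> l"
  shows "lambda_max \<sigma> \<le> l"
proof -
  have "Re (sesq d \<sigma> x x) \<le> l * sqnorm d x" for x
  proof -
    have "(\<lambda>k. lambda_max (X k) * sqnorm d x - Re (sesq d (X k) x x))
        \<longlonglongrightarrow> l * sqnorm d x - Re (sesq d \<sigma> x x)"
      by (intro tendsto_diff tendsto_mult tendsto_const lim tendsto_Re sesq_tendsto conv)
    moreover have "Re (sesq d (X k) x x) \<le> lambda_max (X k) * sqnorm d x" for k
      by (rule sesq_le_lambda_max[OF state_carrier[OF X] state_hermitian[OF X] d])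
    ultimately show ?thesis
      using LIMSEQ_le_const[of _ "l * sqnorm d x - Re (sesq d \<sigma> x x)" 0] by fastforce
  qed
  then have "psd d (shift_mat d l \<sigma>)" using psd_shift_mat_iff[OF state_hermitian[OF \<sigma>]] by blast
  then show ?thesis using psd_shift_mat_iff_lambda_max[OF state_carrier[OF \<sigma>] state_hermitian[OF \<sigma>] d] by blast
qed

lemma continuous_metric_le_limit:
  assumes D: "continuous_metric_on_states d D" and X: "\<And>k. X k \<in> states d"
    and \<sigma>: "\<sigma> \<in> states d" and \<rho>: "\<rho> \<in> states d"
    and conv: "\<And>i j. i < d \<Longrightarrow> j < d \<Longrightarrow> (\<lambda>k. X k $$ (i,j)) \<longlonglongrightarrow> \<sigma> $$ (i,j)"
    and le: "\<And>k. D (X k) \<rho> \<le> \<epsilon>"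
  shows "D \<sigma> \<rho> \<le> \<epsilon>"
proof (rule ccontr)
  assume "\<not> D \<sigma> \<rho> \<le> \<epsilon>"
  then have "D \<sigma> \<rho> - \<epsilon> > 0" by simp
  then obtain \<delta> where "\<delta> > 0" and cont: "\<forall>x'\<in>states d. \<forall>y'\<in>states d.
        (\<forall>i<d. \<forall>j<d. cmod (x' $$ (i,j) - \<sigma> $$ (i,j)) < \<delta> \<and> cmod (y' $$ (i,j) - \<rho> $$ (i,j)) < \<delta>)
        \<longrightarrow> \<bar>D x' y' - D \<sigma> \<rho>\<bar> < D \<sigma> \<rho> - \<epsilon>"
    using D \<sigma> \<rho> unfolding continuous_metric_on_states_def by blast
  have "eventually (\<lambda>k. \<forall>c\<in>{..<d} \<times> {..<d}. dist (X k $$ c) (\<sigma> $$ c) < \<delta>) sequentially"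
  proof (rule eventually_ball_finite)
    show "\<forall>c\<in>{..<d} \<times> {..<d}. eventually (\<lambda>k. dist (X k $$ c) (\<sigma> $$ c) < \<delta>) sequentially"
      using tendstoD[OF conv \<open>\<delta> > 0\<close>] by blast
  qed simp
  then obtain k where "\<forall>c\<in>{..<d} \<times> {..<d}. dist (X k $$ c) (\<sigma> $$ c) < \<delta>"
    unfolding eventually_sequentially by blast
  then have "\<forall>i<d. \<forall>j<d. cmod (X k $$ (i,j) - \<sigma> $$ (i,j)) < \<delta> \<and> cmod (\<rho> $$ (i,j) - \<rho> $$ (i,j)) < \<delta>"
    using \<open>\<delta> > 0\<close> by (simp add: dist_norm)
  then have "\<bar>D (X k) \<rho> - D \<sigma> \<rho>\<bar> < D \<sigma> \<rho> - \<epsilon>" using cont X \<rho> by blast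
  with le[of k] show False by simp
qed

lemma eball_closed:
  assumes D: "continuous_metric_on_states d D" and \<rho>: "\<rho> \<in> states d"
    and X: "\<And>k. X k \<in> eball d D \<epsilon> \<rho>" and \<sigma>: "\<sigma> \<in> carrier_mat d d"
    and conv: "\<And>i j. i < d \<Longrightarrow> j < d \<Longrightarrow> (\<lambda>k. X k $$ (i,j)) \<longlonglongrightarrow> \<sigma> $$ (i,j)"
  shows "\<sigma> \<in> eball d D \<epsilon> \<rho>"
proof -
  have states: "\<And>k. X k \<in> states d" and le: "\<And>k. D (X k) \<rho> \<le> \<epsilon>" using X unfolding eball_def by auto
  have "\<sigma> \<in> states d" by (rule state_limit[OF states \<sigma> conv])
  moreover have "D \<sigma> \<rho> \<le> \<epsilon>" by (rule continuous_metric_le_limit[OF D states \<open>\<sigma> \<in> states d\<close> \<rho> conv le])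
  ultimately show ?thesis unfolding eball_def by simp
qed

lemma eball_lambda_max_attains_min:
  assumes d: "0 < d" and D: "continuous_metric_on_states d D" and \<rho>: "\<rho> \<in> states d"
    and "eball d D \<epsilon> \<rho> \<noteq> {}"
  obtains \<sigma>0 where "\<sigma>0 \<in> eball d D \<epsilon> \<rho>" and "\<And>\<sigma>. \<sigma> \<in> eball d D \<epsilon> \<rho> \<Longrightarrow> lambda_max \<sigma>0 \<le> lambda_max \<sigma>"
proof -
  define V where "V = eball d D \<epsilon> \<rho>"
  have V: "\<And>\<sigma>. \<sigma> \<in> V \<Longrightarrow> \<sigma> \<in> states d" unfolding V_def eball_def by auto
  have bdd: "bdd_below (lambda_max ` V)"
  proof
    fix y assume "y \<in> lambda_max ` V"
    then obtain \<sigma> where "\<sigma> \<in> V" "y = lambda_max \<sigma>" by blast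
    with V lambda_max_state_bounds(2)[OF _ d] show "0 \<le> y" by (metis less_imp_le)
  qed
  obtain X where XV: "\<And>k. X k \<in> V" and lim: "(\<lambda>k. lambda_max (X k)) \<longlonglongrightarrow> Inf (lambda_max ` V)"
    using tendsto_cInf_seq[OF _ bdd] assms(4) unfolding V_def by blast
  have X: "\<And>k. X k \<in> states d" using XV V by blast
  obtain r \<sigma> where r: "strict_mono r" and \<sigma>: "\<sigma> \<in> carrier_mat d d"
    and conv: "\<And>i j. i < d \<Longrightarrow> j < d \<Longrightarrow> (\<lambda>k. X (r k) $$ (i,j)) \<longlonglongrightarrow> \<sigma> $$ (i,j)"
    using states_convergent_subseq[where X = X, OF X] by blast
  have "\<sigma> \<in> V" using eball_closed[OF D \<rho> _ \<sigma> conv] XV unfolding V_def by blast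
  moreover have "(\<lambda>k. lambda_max (X (r k))) \<longlonglongrightarrow> Inf (lambda_max ` V)"
    using LIMSEQ_subseq_LIMSEQ[OF lim r] by (simp add: comp_def)
  then have "lambda_max \<sigma> \<le> Inf (lambda_max ` V)"
    using lambda_max_le_limit[where X = "\<lambda>k. X (r k)", OF d X V[OF \<open>\<sigma> \<in> V\<close>] conv] by blast
  then have "lambda_max \<sigma> \<le> lambda_max \<sigma>'" if "\<sigma>' \<in> V" for \<sigma>'
    using cInf_lower[OF _ bdd] that by (meson image_eqI order.trans)
  ultimately show thesis using that unfolding V_def by blast
qed

section \<open>The cost of the ball\<close>

lemma powr_Hmin:
  assumes "\<sigma> \<in> states d" "0 < d" shows "2 powr Hmin \<sigma> = 1 / lambda_max \<sigma>"
  unfolding Hmin_def using lambda_max_state_bounds(2)[OF assms] by (simp add: powr_minus divide_inverse)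

lemma le_floor_powr_Hmin_iff:
  assumes "\<sigma> \<in> states d" "0 < d" "1 \<le> k"
  shows "int k \<le> \<lfloor>2 powr Hmin \<sigma>\<rfloor> \<longleftrightarrow> lambda_max \<sigma> \<le> 1 / real k"
proof -
  have "int k \<le> \<lfloor>2 powr Hmin \<sigma>\<rfloor> \<longleftrightarrow> real k \<le> 1 / lambda_max \<sigma>"
    unfolding powr_Hmin[OF assms(1,2)] le_floor_iff by simp
  also have "\<dots> \<longleftrightarrow> lambda_max \<sigma> \<le> 1 / real k"
    using lambda_max_state_bounds(2)[OF assms(1,2)] assms(3) by (simp add: field_simps)
  finally show ?thesis .
qed

lemma floor_powr_Hmin_bounds:
  assumes "\<sigma> \<in> states d" "0 < d"
  shows "1 \<le> \<lfloor>2 powr Hmin \<sigma>\<rfloor>" and "\<lfloor>2 powr Hmin \<sigma>\<rfloor> \<le> int d"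
proof -
  show "1 \<le> \<lfloor>2 powr Hmin \<sigma>\<rfloor>"
    using le_floor_powr_Hmin_iff[OF assms, of 1] lambda_max_state_bounds(3)[OF assms] by simp
  have "1 / lambda_max \<sigma> \<le> real d"
    using lambda_max_state_bounds(1,2)[OF assms] by (simp add: field_simps)
  then show "\<lfloor>2 powr Hmin \<sigma>\<rfloor> \<le> int d"
    unfolding powr_Hmin[OF assms] by (metis floor_mono floor_of_nat)
qed

locale lambda_max_minimiser =
  fixes d :: nat and V :: "complex mat set" and \<sigma>0 :: "complex mat"
  assumes dim_pos: "0 < d" and states: "V \<subseteq> states d" and mem: "\<sigma>0 \<in> V"
    and minimal: "\<And>\<sigma>. \<sigma> \<in> V \<Longrightarrow> lambda_max \<sigma>0 \<le> lambda_max \<sigma>"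
begin

definition kmax :: nat where "kmax = nat \<lfloor>2 powr Hmin \<sigma>0\<rfloor>"

lemma kmax_bounds: "1 \<le> kmax" "kmax \<le> d" "int kmax = \<lfloor>2 powr Hmin \<sigma>0\<rfloor>"
proof -
  have "\<sigma>0 \<in> states d" using mem states by auto
  from floor_powr_Hmin_bounds[OF this dim_pos]
  show "1 \<le> kmax" "kmax \<le> d" "int kmax = \<lfloor>2 powr Hmin \<sigma>0\<rfloor>" unfolding kmax_def by linarith+
qed

lemma floor_powr_Hmin_le_kmax:
  assumes "\<sigma> \<in> V" shows "\<lfloor>2 powr Hmin \<sigma>\<rfloor> \<le> int kmax"
proof -
  have \<sigma>: "\<sigma> \<in> states d" and \<sigma>0: "\<sigma>0 \<in> states d" using assms mem states by auto
  then have "1 / lambda_max \<sigma> \<le> 1 / lambda_max \<sigma>0"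
    using minimal[OF assms] lambda_max_state_bounds(2)[OF _ dim_pos] by (simp add: frac_le)
  then show ?thesis
    unfolding kmax_bounds(3) powr_Hmin[OF \<sigma> dim_pos] powr_Hmin[OF \<sigma>0 dim_pos] by (rule floor_mono)
qed

lemma converting_currencies: "{k \<in> {1..d}. converts d (Ccur d k) V} = {1..kmax}"
proof (intro equalityI subsetI)
  fix k assume "k \<in> {k \<in> {1..d}. converts d (Ccur d k) V}"
  then have k: "1 \<le> k" "k \<le> d" and "converts d (Ccur d k) V" by auto
  then obtain \<sigma> where "\<sigma> \<in> V" "lambda_max \<sigma> \<le> 1 / real k"
    using converts_iff_lambda_max[OF k states] by blast
  moreover have "\<sigma> \<in> states d" using \<open>\<sigma> \<in> V\<close> states by auto
  ultimately have "int k \<le> \<lfloor>2 powr Hmin \<sigma>\<rfloor>" using le_floor_powr_Hmin_iff[OF _ dim_pos k(1)] by blast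
  then have "k \<le> kmax" using floor_powr_Hmin_le_kmax[OF \<open>\<sigma> \<in> V\<close>] by linarith
  then show "k \<in> {1..kmax}" using k by simp
next
  fix k assume "k \<in> {1..kmax}"
  then have k: "1 \<le> k" "k \<le> d" and "int k \<le> \<lfloor>2 powr Hmin \<sigma>0\<rfloor>"
    using kmax_bounds by auto
  moreover have "\<sigma>0 \<in> states d" using mem states by auto
  ultimately have "lambda_max \<sigma>0 \<le> 1 / real k" using le_floor_powr_Hmin_iff[OF _ dim_pos k(1)] by blast
  then show "k \<in> {k \<in> {1..d}. converts d (Ccur d k) V}"
    using converts_iff_lambda_max[OF k states] mem k by auto
qed

lemma cost_eq: "cost d V = log 2 (real d) - log 2 (real kmax)"
proof -
  have "cost d V = Inf ((\<lambda>k. log 2 (real d) - log 2 (real k)) ` {1..kmax}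
      \<union> (if converts d (states d) V then {0} else {}))"
    unfolding cost_def converting_currencies ..
  also have "\<dots> = log 2 (real d) - log 2 (real kmax)"
  proof (rule cInf_eq_minimum)
    show "log 2 (real d) - log 2 (real kmax) \<in> (\<lambda>k. log 2 (real d) - log 2 (real k)) ` {1..kmax}
      \<union> (if converts d (states d) V then {0} else {})"
      using kmax_bounds(1) by simp
    fix x assume "x \<in> (\<lambda>k. log 2 (real d) - log 2 (real k)) ` {1..kmax}
      \<union> (if converts d (states d) V then {0} else {})"
    then consider k where "k \<in> {1..kmax}" "x = log 2 (real d) - log 2 (real k)"
      | "x = 0" "converts d (states d) V"
      by (auto split: if_splits)
    then show "log 2 (real d) - log 2 (real kmax) \<le> x"
    proof cases
      case 2
      \<comment> \<open>the free currency \<Omega> is only usable when C(d) is, which forces kmax = d\<close>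
      then have "d \<in> {1..kmax}"
        using converts_states_imp_maximally_mixed[OF dim_pos] converting_currencies dim_pos by auto
      then show ?thesis using 2 kmax_bounds(2) by simp
    qed simp
  qed
  finally show ?thesis .
qed

lemma SUP_log_floor_powr_Hmin: "(SUP \<sigma>\<in>V. log 2 (of_int \<lfloor>2 powr Hmin \<sigma>\<rfloor>)) = log 2 (real kmax)"
proof (rule cSup_eq_maximum)
  have "log 2 (real kmax) = log 2 (of_int \<lfloor>2 powr Hmin \<sigma>0\<rfloor>)" unfolding kmax_bounds(3)[symmetric] by simp
  then show "log 2 (real kmax) \<in> (\<lambda>\<sigma>. log 2 (of_int \<lfloor>2 powr Hmin \<sigma>\<rfloor>)) ` V" using mem by blast
  fix x assume "x \<in> (\<lambda>\<sigma>. log 2 (of_int \<lfloor>2 powr Hmin \<sigma>\<rfloor>)) ` V"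
  then obtain \<sigma> where "\<sigma> \<in> V" and x: "x = log 2 (of_int \<lfloor>2 powr Hmin \<sigma>\<rfloor>)" by blast
  moreover have "\<sigma> \<in> states d" using \<open>\<sigma> \<in> V\<close> states by auto
  ultimately have "1 \<le> \<lfloor>2 powr Hmin \<sigma>\<rfloor>" "\<lfloor>2 powr Hmin \<sigma>\<rfloor> \<le> int kmax"
    using floor_powr_Hmin_bounds(1)[OF _ dim_pos] floor_powr_Hmin_le_kmax by blast+
  then have "0 < real_of_int \<lfloor>2 powr Hmin \<sigma>\<rfloor>" "real_of_int \<lfloor>2 powr Hmin \<sigma>\<rfloor> \<le> real kmax"
    by linarith+
  then show "x \<le> log 2 (real kmax)" unfolding x by (intro log_mono) simp_all
qed

lemma SUP_Hmin: "(SUP \<sigma>\<in>V. Hmin \<sigma>) = Hmin \<sigma>0"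
proof (rule cSup_eq_maximum)
  fix x assume "x \<in> Hmin ` V"
  then obtain \<sigma> where "\<sigma> \<in> V" "x = Hmin \<sigma>" by blast
  moreover have "0 < lambda_max \<sigma>0" "0 < lambda_max \<sigma>"
    using lambda_max_state_bounds(2)[OF _ dim_pos] mem states \<open>\<sigma> \<in> V\<close> by blast+
  ultimately show "x \<le> Hmin \<sigma>0" unfolding Hmin_def using minimal by simp
qed (use mem in simp)

end

theorem mainTheorem18:
  fixes d :: nat and D :: "complex mat \<Rightarrow> complex mat \<Rightarrow> real"
    and \<rho> :: "complex mat" and \<epsilon> :: real
  assumes "d \<ge> 1"
    and "continuous_metric_on_states d D"
    and "\<rho> \<in> states d"
    and "0 \<le> \<epsilon>" and "\<epsilon> \<le> 1"
  shows "cost d (eball d D \<epsilon> \<rho>)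
           = log 2 (real d) - (SUP \<sigma> \<in> eball d D \<epsilon> \<rho>. log 2 (of_int \<lfloor>2 powr Hmin \<sigma>\<rfloor>))
       \<and> log 2 (real d) - (SUP \<sigma> \<in> eball d D \<epsilon> \<rho>. log 2 (of_int \<lfloor>2 powr Hmin \<sigma>\<rfloor>))
           = log 2 (real d) - log 2 (of_int \<lfloor>2 powr Hmin_eps d D \<epsilon> \<rho>\<rfloor>)"
proof -
  have d: "0 < d" using assms(1) by simp
  have "D \<rho> \<rho> = 0" using assms(2,3) unfolding continuous_metric_on_states_def by blast
  then have "\<rho> \<in> eball d D \<epsilon> \<rho>" using assms(3,4) unfolding eball_def by simp
  then obtain \<sigma>0 where "\<sigma>0 \<in> eball d D \<epsilon> \<rho>"
    and "\<And>\<sigma>. \<sigma> \<in> eball d D \<epsilon> \<rho> \<Longrightarrow> lambda_max \<sigma>0 \<le> lambda_max \<sigma>"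
    using eball_lambda_max_attains_min[OF d assms(2,3)] by blast
  then interpret lambda_max_minimiser d "eball d D \<epsilon> \<rho>" \<sigma>0
    using d by unfold_locales (auto simp: eball_def)
  show ?thesis
    unfolding Hmin_eps_def cost_eq SUP_log_floor_powr_Hmin SUP_Hmin kmax_bounds(3)[symmetric] by simp
qed

end
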